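(* Let $H$ be a Hamiltonian on a finite-dimensional Hilbert space with a nondegenerate ground state, and let $\rho$ be any state. Then for every $\beta\in(0,\infty)$, $$F(\rho)\le F_\beta(\rho)-F_\beta(\gamma_\beta),$$ and if $0<\beta(\rho)<\infty$ (equivalently $0<S(\rho)<\log d$) equality holds at $\beta=\beta(\rho)$. In particular, in that case $F(\rho)=\min_{\beta>0}\big(F_\beta(\rho)-F_\beta(\gamma_\beta)\big)$, with the minimum attained at the intrinsic inverse temperature $\beta(\rho)$.
   Context: For a finite-dimensional system with Hilbert space of dimension $d\ge 2$ and Hamiltonian $H$ having a nondegenerate smallest eigenvalue: $E(\rho)={\operatorname{Tr}}(H\rho)$, $S(\rho)=-{\operatorname{Tr}}\rho\log\rho$. For $\beta\in[0,\infty)$, $\gamma_\beta=e^{-\beta H}/{\operatorname{Tr}}(e^{-\beta H})$, and $\gamma_\infty$ is the ground-state projector. The intrinsic inverse temperature $\beta(\rho)\in[0,\infty]$ is the unique $\beta$ with $S(\gamma_\beta)=S(\rho)$ (the map $\beta\mapsto S(\gamma_\beta)$ being a strictly decreasing bijection $[0,\infty]\to[0,\log d]$). Bound energy: $B(\rho)=\min\{E(\sigma):S(\sigma)=S(\rho)\}$ (which equals $E(\gamma_{\beta(\rho)})$); free energy: $F(\rho)=E(\rho)-B(\rho)$. For $\beta>0$ the $\beta$-free energy is $F_\beta(\rho)=E(\rho)-\beta^{-1}S(\rho)$. *)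

theory Defs
  imports "Jordan_Normal_Form.Schur_Decomposition" "Jordan_Normal_Form.Char_Poly"
    "HOL-Computational_Algebra.Fundamental_Theorem_Algebra"
    "HOL-Library.Extended_Real"
begin

definition trace :: "complex mat \<Rightarrow> complex" where
  "trace A = (\<Sum>i<dim_row A. A $$ (i,i))"

definition hermitian_mat :: "nat \<Rightarrow> complex mat \<Rightarrow> bool" where
  "hermitian_mat d A \<longleftrightarrow> A \<in> carrier_mat d d \<and> mat_adjoint A = A"

definition is_state :: "nat \<Rightarrow> complex mat \<Rightarrow> bool" where
  "is_state d \<rho> \<longleftrightarrow> hermitian_mat d \<rho>
     \<and> (\<forall>v \<in> carrier_vec d. Re ((\<rho> *\<^sub>v v) \<bullet>c v) \<ge> 0)
     \<and> trace \<rho> = 1"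

definition eigvals :: "complex mat \<Rightarrow> complex multiset" where
  "eigvals A = proots (char_poly A)"

definition xlogx :: "real \<Rightarrow> real" where
  "xlogx x = (if x = 0 then 0 else x * ln x)"

(* von Neumann entropy S(rho) = - Tr rho log rho = - sum over eigenvalues of l log l *)
definition entropy :: "complex mat \<Rightarrow> real" where
  "entropy \<rho> = - (\<Sum>l\<in>#eigvals \<rho>. xlogx (Re l))"

definition energy :: "complex mat \<Rightarrow> complex mat \<Rightarrow> real" where
  "energy H \<rho> = Re (trace (H * \<rho>))"

definition mat_exp :: "complex mat \<Rightarrow> complex mat" where
  "mat_exp A = mat (dim_row A) (dim_col A)
     (\<lambda>(i,j). \<Sum>k. (A ^\<^sub>m k) $$ (i,j) / of_nat (fact k))"

definition gibbs :: "complex mat \<Rightarrow> real \<Rightarrow> complex mat" where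
  "gibbs H \<beta> = (1 / trace (mat_exp ((- complex_of_real \<beta>) \<cdot>\<^sub>m H)))
                  \<cdot>\<^sub>m mat_exp ((- complex_of_real \<beta>) \<cdot>\<^sub>m H)"

definition min_eig :: "complex mat \<Rightarrow> real" where
  "min_eig H = Min (Re ` set_mset (eigvals H))"

definition nondeg_ground :: "complex mat \<Rightarrow> bool" where
  "nondeg_ground H \<longleftrightarrow> count (eigvals H) (complex_of_real (min_eig H)) = 1"

definition ground_proj :: "complex mat \<Rightarrow> complex mat" where
  "ground_proj H = (THE P. hermitian_mat (dim_row H) P \<and> P * P = P \<and> trace P = 1
                          \<and> H * P = complex_of_real (min_eig H) \<cdot>\<^sub>m P)"

definition gibbs_e :: "complex mat \<Rightarrow> ereal \<Rightarrow> complex mat" where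
  "gibbs_e H b = (case b of ereal r \<Rightarrow> gibbs H r | _ \<Rightarrow> ground_proj H)"

definition beta_intr :: "complex mat \<Rightarrow> complex mat \<Rightarrow> ereal" where
  "beta_intr H \<rho> = (THE b. 0 \<le> b \<and> entropy (gibbs_e H b) = entropy \<rho>)"

definition bound_energy :: "complex mat \<Rightarrow> complex mat \<Rightarrow> real" where
  "bound_energy H \<rho> = Inf (energy H ` {\<sigma>. is_state (dim_row H) \<sigma> \<and> entropy \<sigma> = entropy \<rho>})"

definition free_energy :: "complex mat \<Rightarrow> complex mat \<Rightarrow> real" where
  "free_energy H \<rho> = energy H \<rho> - bound_energy H \<rho>"

definition beta_free_energy :: "complex mat \<Rightarrow> real \<Rightarrow> complex mat \<Rightarrow> real" where
  "beta_free_energy H \<beta> \<rho> = energy H \<rho> - entropy \<rho> / \<beta>"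

end

theory Submission
  imports Defs
begin

text \<open>Write H = \<Sum>_i h_i |u_i\<rangle>\<langle>u_i| and \<sigma> = \<Sum>_j p_j |v_j\<rangle>\<langle>v_j| in eigenbases. The squared overlaps
  |\<langle>u_i|v_j\<rangle>|^2 form a doubly stochastic matrix, so Jensen's inequality for exp and Gibbs'
  inequality give the variational principle F_\<beta>(\<sigma>) \<ge> -ln Z_\<beta> / \<beta> = F_\<beta>(\<gamma>_\<beta>) for every state \<sigma>.
  Applied to the states of entropy S(\<rho>) it bounds the bound energy below by F_\<beta>(\<gamma>_\<beta>) + S(\<rho>)/\<beta>,
  which is the inequality. At \<beta> = \<beta>(\<rho>) the Gibbs state itself has entropy S(\<rho>), hence is
  admissible in the bound energy, and the inequality becomes an equality. That \<beta>(\<rho>) is well defined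
  rests on \<beta> \<mapsto> S(\<gamma>_\<beta>) being continuous and strictly decreasing from ln d towards 0, with
  S(\<gamma>_\<infinity>) = 0 because the ground state is nondegenerate.\<close>

text \<open>Square matrices on the index set {..<n} are handled as functions; U a i is the a-th
  coordinate of the i-th column.\<close>

definition unitary_fun :: "nat \<Rightarrow> (nat \<Rightarrow> nat \<Rightarrow> complex) \<Rightarrow> bool" where
  "unitary_fun n U \<longleftrightarrow>
     (\<forall>i<n. \<forall>j<n. (\<Sum>a<n. cnj (U a i) * U a j) = (if i = j then 1 else 0)) \<and>
     (\<forall>a<n. \<forall>b<n. (\<Sum>i<n. U a i * cnj (U b i)) = (if a = b then 1 else 0))"

lemma sum_mult_delta [simp]:
  "a < (n::nat) \<Longrightarrow> (\<Sum>b<n. f b * (if a = b then 1 else 0)) = (f a :: 'a::comm_ring_1)"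
  by (simp add: if_distrib[of "(*) _"] sum.delta cong: if_cong)

lemma sum_mult_delta' [simp]:
  "a < (n::nat) \<Longrightarrow> (\<Sum>b<n. f b * (if b = a then 1 else 0)) = (f a :: 'a::comm_ring_1)"
  by (simp add: if_distrib[of "(*) _"] sum.delta' cong: if_cong)

lemma cnj_mult_self: "cnj c * c = complex_of_real ((cmod c)\<^sup>2)"
  by (subst complex_norm_square) (simp add: mult.commute)

text \<open>Orthonormal columns suffice: a left inverse of a square matrix is a right inverse.\<close>

lemma unitary_funI:
  assumes "\<And>i j. i < n \<Longrightarrow> j < n \<Longrightarrow> (\<Sum>a<n. cnj (W a i) * W a j) = (if i = j then 1 else 0)"
  shows "unitary_fun n W"
proof -
  define P where "P = mat n n (\<lambda>(a,i). W a i)"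
  define Q where "Q = mat n n (\<lambda>(i,b). cnj (W b i))"
  have Pc: "P \<in> carrier_mat n n" and Qc: "Q \<in> carrier_mat n n" by (auto simp: P_def Q_def)
  have "Q * P = 1\<^sub>m n"
    using assms by (auto simp: P_def Q_def scalar_prod_def atLeast0LessThan intro!: eq_matI)
  then have PQ: "P * Q = 1\<^sub>m n" by (rule mat_mult_left_right_inverse[OF Qc Pc])
  have "(\<Sum>i<n. W a i * cnj (W b i)) = (if a = b then 1 else 0)" if "a < n" "b < n" for a b
  proof -
    have "(P * Q) $$ (a,b) = (\<Sum>i<n. W a i * cnj (W b i))"
      using that by (simp add: P_def Q_def scalar_prod_def atLeast0LessThan)
    then show ?thesis using PQ that by simp
  qed
  then show ?thesis using assms unfolding unitary_fun_def by auto
qed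

lemma unitary_fun_mult:
  assumes "unitary_fun n W" "unitary_fun n V"
  shows "unitary_fun n (\<lambda>a i. \<Sum>c<n. W a c * V c i)"
proof (rule unitary_funI)
  fix i j assume ij: "i < n" "j < n"
  have W1: "\<And>c d. c < n \<Longrightarrow> d < n \<Longrightarrow> (\<Sum>a<n. cnj (W a c) * W a d) = (if c = d then 1 else 0)"
    and V1: "(\<Sum>c<n. cnj (V c i) * V c j) = (if i = j then 1 else 0)"
    using assms ij unfolding unitary_fun_def by auto
  have "(\<Sum>a<n. cnj (\<Sum>c<n. W a c * V c i) * (\<Sum>d<n. W a d * V d j))
      = (\<Sum>a<n. \<Sum>c<n. \<Sum>d<n. cnj (V c i) * V d j * (cnj (W a c) * W a d))"
    by (simp add: sum_product mult_ac) (rule sum.cong[OF refl], rule sum.swap)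
  also have "\<dots> = (\<Sum>c<n. \<Sum>d<n. \<Sum>a<n. cnj (V c i) * V d j * (cnj (W a c) * W a d))"
    by (subst sum.swap) (rule sum.cong[OF refl], rule sum.swap)
  also have "\<dots> = (\<Sum>c<n. \<Sum>d<n. cnj (V c i) * V d j * (if c = d then 1 else 0))"
    by (intro sum.cong refl) (simp add: W1 flip: sum_distrib_left)
  also have "\<dots> = (\<Sum>c<n. cnj (V c i) * V c j)"
    by (intro sum.cong refl) simp
  finally show "(\<Sum>a<n. cnj (\<Sum>c<n. W a c * V c i) * (\<Sum>d<n. W a d * V d j)) = (if i = j then 1 else 0)"
    using V1 by simp
qed

definition unitary_conj :: "nat \<Rightarrow> (nat \<Rightarrow> nat \<Rightarrow> complex) \<Rightarrow> (nat \<Rightarrow> nat \<Rightarrow> complex) \<Rightarrow> nat \<Rightarrow> nat \<Rightarrow> complex" where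
  "unitary_conj n W A c d = (\<Sum>x<n. \<Sum>y<n. cnj (W x c) * A x y * W y d)"

lemma unitary_conj_cancel:
  assumes "unitary_fun n W" "a < n" "b < n"
  shows "(\<Sum>c<n. \<Sum>d<n. W a c * unitary_conj n W A c d * cnj (W b d)) = A a b"
proof -
  have W2: "\<And>x y. x < n \<Longrightarrow> y < n \<Longrightarrow> (\<Sum>c<n. W x c * cnj (W y c)) = (if x = y then 1 else 0)"
    using assms unfolding unitary_fun_def by auto
  have "(\<Sum>c<n. \<Sum>d<n. W a c * unitary_conj n W A c d * cnj (W b d))
     = (\<Sum>c<n. \<Sum>d<n. \<Sum>x<n. \<Sum>y<n. A x y * (W a c * cnj (W x c)) * (W y d * cnj (W b d)))"
    by (simp add: unitary_conj_def sum_distrib_left sum_distrib_right mult_ac)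
  also have "\<dots> = (\<Sum>x<n. \<Sum>c<n. \<Sum>d<n. \<Sum>y<n. A x y * (W a c * cnj (W x c)) * (W y d * cnj (W b d)))"
    by (subst sum.swap) (rule sum.cong[OF refl], rule sum.swap)
  also have "\<dots> = (\<Sum>x<n. \<Sum>y<n. \<Sum>c<n. \<Sum>d<n. A x y * (W a c * cnj (W x c)) * (W y d * cnj (W b d)))"
    by (rule sum.cong[OF refl], subst sum.swap, rule sum.cong[OF refl], rule sum.swap)
  also have "\<dots> = (\<Sum>x<n. \<Sum>y<n. A x y * (\<Sum>c<n. W a c * cnj (W x c)) * (\<Sum>d<n. W y d * cnj (W b d)))"
    by (simp add: sum_distrib_left sum_distrib_right mult_ac)
  also have "\<dots> = (\<Sum>x<n. \<Sum>y<n. A x y * (if a = x then 1 else 0) * (if y = b then 1 else 0))"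
    using assms by (intro sum.cong refl) (simp add: W2)
  also have "\<dots> = A a b" using assms by simp
  finally show ?thesis .
qed

lemma unitary_conj_diag:
  "(\<Sum>c<n. \<Sum>d<n. W a c * (\<Sum>i<n. V c i * complex_of_real (l i) * cnj (V d i)) * cnj (W b d))
   = (\<Sum>i<n. (\<Sum>c<n. W a c * V c i) * complex_of_real (l i) * cnj (\<Sum>d<n. W b d * V d i))"
proof -
  have "(\<Sum>c<n. \<Sum>d<n. W a c * (\<Sum>i<n. V c i * complex_of_real (l i) * cnj (V d i)) * cnj (W b d))
     = (\<Sum>c<n. \<Sum>d<n. \<Sum>i<n. W a c * V c i * complex_of_real (l i) * cnj (V d i) * cnj (W b d))"
    by (simp add: sum_distrib_left sum_distrib_right mult_ac)
  also have "\<dots> = (\<Sum>i<n. \<Sum>c<n. \<Sum>d<n. W a c * V c i * complex_of_real (l i) * cnj (V d i) * cnj (W b d))"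
    by (subst sum.swap[of _ _ "{..<n}"]) (rule sum.swap[of _ "{..<n}"])
  also have "\<dots> = (\<Sum>i<n. (\<Sum>c<n. W a c * V c i) * complex_of_real (l i) * cnj (\<Sum>d<n. W b d * V d i))"
    by (simp add: sum_distrib_left sum_distrib_right mult_ac)
  finally show ?thesis .
qed

definition eigen_decomp :: "nat \<Rightarrow> (nat \<Rightarrow> nat \<Rightarrow> complex) \<Rightarrow> (nat \<Rightarrow> real) \<Rightarrow> complex mat \<Rightarrow> bool" where
  "eigen_decomp n U l M \<longleftrightarrow> unitary_fun n U \<and> M \<in> carrier_mat n n \<and>
     (\<forall>a<n. \<forall>b<n. M $$ (a,b) = (\<Sum>i<n. U a i * of_real (l i) * cnj (U b i)))"

lemma eigen_decomp_similar_diag: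
  assumes "eigen_decomp n U l M"
  shows "similar_mat M (mat n n (\<lambda>(i,j). if i = j then complex_of_real (l i) else 0))"
    (is "similar_mat M ?D")
proof -
  have U: "unitary_fun n U" and M: "M \<in> carrier_mat n n"
    and Me: "\<And>a b. a<n \<Longrightarrow> b<n \<Longrightarrow> M $$ (a,b) = (\<Sum>i<n. U a i * of_real (l i) * cnj (U b i))"
    using assms unfolding eigen_decomp_def by auto
  define P where "P = mat n n (\<lambda>(a,i). U a i)"
  define Q where "Q = mat n n (\<lambda>(i,b). cnj (U b i))"
  have PQ: "P * Q = 1\<^sub>m n" and QP: "Q * P = 1\<^sub>m n"
    using U unfolding unitary_fun_def
    by (auto simp: P_def Q_def scalar_prod_def atLeast0LessThan intro!: eq_matI)
  have PD: "P * ?D = mat n n (\<lambda>(a,i). U a i * complex_of_real (l i))"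
  proof (rule eq_matI)
    fix a i assume "a < dim_row (mat n n (\<lambda>(a,i). U a i * complex_of_real (l i)))"
      "i < dim_col (mat n n (\<lambda>(a,i). U a i * complex_of_real (l i)))"
    then have a: "a < n" and i: "i < n" by auto
    have "(P * ?D) $$ (a,i) = (\<Sum>c\<in>{0..<n}. U a c * (if c = i then complex_of_real (l c) else 0))"
      using a i by (simp add: P_def scalar_prod_def)
    also have "\<dots> = U a i * complex_of_real (l i)"
      by (simp add: if_distrib[of "\<lambda>x. U a _ * x"] sum.delta' i cong: if_cong)
    finally show "(P * ?D) $$ (a,i) = mat n n (\<lambda>(a,i). U a i * complex_of_real (l i)) $$ (a,i)"
      using a i by simp
  qed (auto simp: P_def)
  have "M = P * ?D * Q"
  proof (rule eq_matI)
    fix a b assume "a < dim_row (P * ?D * Q)" "b < dim_col (P * ?D * Q)"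
    then have a: "a < n" and b: "b < n" by (auto simp: P_def Q_def)
    show "M $$ (a,b) = (P * ?D * Q) $$ (a,b)"
      unfolding PD using a b Me[OF a b]
      by (simp add: Q_def scalar_prod_def atLeast0LessThan)
  qed (use M in \<open>auto simp: P_def Q_def\<close>)
  then show ?thesis
    unfolding similar_mat_def similar_mat_wit_def
    using M PQ QP by (intro exI[of _ P] exI[of _ Q]) (auto simp: P_def Q_def Let_def)
qed

lemma eigvals_eigen_decomp:
  assumes "eigen_decomp n U l M"
  shows "eigvals M = image_mset (\<lambda>i. complex_of_real (l i)) (mset [0..<n])"
proof -
  define D where "D = mat n n (\<lambda>(i,j). if i = j then complex_of_real (l i) else 0)"
  have "char_poly M = char_poly D"
    unfolding D_def by (rule char_poly_similar[OF eigen_decomp_similar_diag[OF assms]])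
  also have "\<dots> = (\<Prod>a\<leftarrow>diag_mat D. [:- a, 1:])"
    by (rule char_poly_upper_triangular) (auto simp: D_def upper_triangular_def)
  finally have cp: "char_poly M = (\<Prod>a\<leftarrow>diag_mat D. [:- a, 1:])" .
  have dm: "diag_mat D = map (\<lambda>i. complex_of_real (l i)) [0..<n]"
    by (simp add: diag_mat_def D_def)
  have "eigvals M = (\<Sum>p\<leftarrow>map (\<lambda>a. [:- a, 1:]) (diag_mat D). proots p)"
    unfolding eigvals_def cp by (subst proots_prod_list[symmetric]) (auto simp: o_def)
  also have "\<dots> = image_mset (\<lambda>i. complex_of_real (l i)) (mset [0..<n])"
    unfolding dm by (induction n) auto
  finally show ?thesis .
qed

lemma mat_adjoint_index:
  "i < dim_col A \<Longrightarrow> j < dim_row A \<Longrightarrow> mat_adjoint A $$ (i,j) = cnj (A $$ (j,i))"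
  "dim_row (mat_adjoint A) = dim_col A" "dim_col (mat_adjoint A) = dim_row A"
  by (auto simp: mat_adjoint_def mat_of_rows_def)

lemma hermitian_mat_entry:
  assumes "hermitian_mat n A" "x < n" "y < n"
  shows "A $$ (y,x) = cnj (A $$ (x,y))"
proof -
  have "A \<in> carrier_mat n n" and "mat_adjoint A = A"
    using assms unfolding hermitian_mat_def by auto
  then show ?thesis using assms by (metis mat_adjoint_index(1) carrier_matD)
qed

lemma hermitian_eigen_decomp:
  assumes "eigen_decomp n U l M"
  shows "hermitian_mat n M"
proof -
  have M: "M \<in> carrier_mat n n" using assms by (simp add: eigen_decomp_def)
  show ?thesis unfolding hermitian_mat_def
  proof (intro conjI M eq_matI)
    fix i j assume "i < dim_row M" "j < dim_col M"
    then show "mat_adjoint M $$ (i,j) = M $$ (i,j)"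
      using assms M unfolding eigen_decomp_def by (simp add: mat_adjoint_index mult_ac)
  qed (use M in \<open>auto simp: mat_adjoint_index\<close>)
qed

lemma trace_eigen_decomp:
  assumes "eigen_decomp n U l M"
  shows "trace M = (\<Sum>i<n. complex_of_real (l i))"
proof -
  have U: "\<And>i. i < n \<Longrightarrow> (\<Sum>a<n. cnj (U a i) * U a i) = 1"
    using assms unfolding eigen_decomp_def unitary_fun_def by auto
  have "trace M = (\<Sum>a<n. \<Sum>i<n. U a i * of_real (l i) * cnj (U a i))"
    using assms unfolding eigen_decomp_def trace_def by auto
  also have "\<dots> = (\<Sum>i<n. of_real (l i) * (\<Sum>a<n. cnj (U a i) * U a i))"
    by (subst sum.swap) (simp add: sum_distrib_left mult_ac)
  also have "\<dots> = (\<Sum>i<n. complex_of_real (l i))"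
    using U by simp
  finally show ?thesis .
qed

lemma quadratic_form_eigen_decomp:
  assumes "eigen_decomp n U l M" "v \<in> carrier_vec n"
  shows "(M *\<^sub>v v) \<bullet>c v =
    (\<Sum>i<n. complex_of_real (l i) * (cnj (\<Sum>b<n. cnj (U b i) * v $ b) * (\<Sum>b<n. cnj (U b i) * v $ b)))"
proof -
  have M: "M \<in> carrier_mat n n"
    and Me: "\<And>a b. a<n \<Longrightarrow> b<n \<Longrightarrow> M $$ (a,b) = (\<Sum>i<n. U a i * of_real (l i) * cnj (U b i))"
    using assms unfolding eigen_decomp_def by auto
  have "(M *\<^sub>v v) \<bullet>c v = (\<Sum>a<n. (\<Sum>b<n. M $$ (a,b) * v $ b) * cnj (v $ a))"
    using M assms(2) by (simp add: scalar_prod_def atLeast0LessThan)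
  also have "\<dots> = (\<Sum>a<n. \<Sum>b<n. \<Sum>i<n. U a i * of_real (l i) * cnj (U b i) * v $ b * cnj (v $ a))"
    by (simp add: Me sum_distrib_right)
  also have "\<dots> = (\<Sum>i<n. \<Sum>a<n. \<Sum>b<n. U a i * of_real (l i) * cnj (U b i) * v $ b * cnj (v $ a))"
    by (subst sum.swap[of _ _ "{..<n}"], rule sum.cong[OF refl], rule sum.swap)
  also have "\<dots> = (\<Sum>i<n. complex_of_real (l i) *
      (cnj (\<Sum>b<n. cnj (U b i) * v $ b) * (\<Sum>b<n. cnj (U b i) * v $ b)))"
    by (simp add: sum_distrib_left sum_distrib_right sum_product mult_ac)
  finally show ?thesis .
qed

lemma psd_eigen_decomp:
  assumes "eigen_decomp n U l M" "\<And>i. i < n \<Longrightarrow> l i \<ge> 0" "v \<in> carrier_vec n"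
  shows "Re ((M *\<^sub>v v) \<bullet>c v) \<ge> 0"
  unfolding quadratic_form_eigen_decomp[OF assms(1,3)] cnj_mult_self Re_sum
  using assms(2) by (auto intro!: sum_nonneg simp del: of_real_power)

lemma eigen_decomp_nonneg:
  assumes "eigen_decomp n U l M" "\<forall>v \<in> carrier_vec n. Re ((M *\<^sub>v v) \<bullet>c v) \<ge> 0" "j < n"
  shows "l j \<ge> 0"
proof -
  define v where "v = vec n (\<lambda>b. U b j)"
  have v: "v \<in> carrier_vec n" by (simp add: v_def)
  have U: "\<And>i. i < n \<Longrightarrow> (\<Sum>b<n. cnj (U b i) * v $ b) = (if i = j then 1 else 0)"
    using assms(1,3) unfolding eigen_decomp_def unitary_fun_def v_def by auto
  have "(M *\<^sub>v v) \<bullet>c v = (\<Sum>i<n. complex_of_real (l i) * (if i = j then 1 else 0))"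
    unfolding quadratic_form_eigen_decomp[OF assms(1) v] by (rule sum.cong) (auto simp: U)
  also have "\<dots> = complex_of_real (l j)" using assms(3) by simp
  finally show ?thesis using assms(2) v by force
qed

lemma eigen_decomp_smult:
  assumes "eigen_decomp n U l M"
  shows "eigen_decomp n U (\<lambda>i. c * l i) (complex_of_real c \<cdot>\<^sub>m M)"
  using assms unfolding eigen_decomp_def by (auto simp: sum_distrib_left mult_ac)

lemma eigen_decomp_left_mult:
  assumes "eigen_decomp n U l M" "X \<in> carrier_mat n n" "i < n" "b < n"
  shows "(\<Sum>a<n. cnj (U a i) * (M * X) $$ (a,b)) = of_real (l i) * (\<Sum>a<n. cnj (U a i) * X $$ (a,b))"
proof -
  have Mc: "M \<in> carrier_mat n n"
    and Me: "\<And>a b. a<n \<Longrightarrow> b<n \<Longrightarrow> M $$ (a,b) = (\<Sum>i<n. U a i * of_real (l i) * cnj (U b i))"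
    and U1: "\<And>i j. i<n \<Longrightarrow> j<n \<Longrightarrow> (\<Sum>a<n. cnj (U a i) * U a j) = (if i=j then 1 else 0)"
    using assms(1) unfolding eigen_decomp_def unitary_fun_def by auto
  have "(\<Sum>a<n. cnj (U a i) * (M * X) $$ (a,b)) = (\<Sum>a<n. cnj (U a i) * (\<Sum>c<n. M $$ (a,c) * X $$ (c,b)))"
    using Mc assms(2,4) by (intro sum.cong refl) (simp add: scalar_prod_def atLeast0LessThan)
  also have "\<dots> = (\<Sum>a<n. \<Sum>c<n. \<Sum>j<n. of_real (l j) * cnj (U c j) * X $$ (c,b) * (cnj (U a i) * U a j))"
    by (intro sum.cong refl) (simp add: Me sum_distrib_left sum_distrib_right mult_ac)
  also have "\<dots> = (\<Sum>c<n. \<Sum>j<n. \<Sum>a<n. of_real (l j) * cnj (U c j) * X $$ (c,b) * (cnj (U a i) * U a j))"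
    by (subst sum.swap) (rule sum.cong[OF refl], rule sum.swap)
  also have "\<dots> = (\<Sum>c<n. \<Sum>j<n. of_real (l j) * cnj (U c j) * X $$ (c,b) * (if i = j then 1 else 0))"
    using assms(3) by (intro sum.cong refl) (simp add: U1 flip: sum_distrib_left)
  also have "\<dots> = (\<Sum>c<n. of_real (l i) * cnj (U c i) * X $$ (c,b))"
    using assms(3) by (intro sum.cong refl) (rule sum_mult_delta)
  also have "\<dots> = of_real (l i) * (\<Sum>a<n. cnj (U a i) * X $$ (a,b))"
    by (simp add: sum_distrib_left mult_ac)
  finally show ?thesis .
qed

lemma eigen_decomp_cong:
  assumes "eigen_decomp n U l M" "eigen_decomp n U l' N" "\<And>i. i < n \<Longrightarrow> l i = l' i"
  shows "M = N"
  using assms unfolding eigen_decomp_def by (auto intro!: eq_matI)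

lemma eigen_decomp_one:
  assumes "unitary_fun n U"
  shows "eigen_decomp n U (\<lambda>_. 1) (1\<^sub>m n)"
  using assms unfolding eigen_decomp_def unitary_fun_def by auto

lemma eigen_decomp_mult:
  assumes "eigen_decomp n U l M" "eigen_decomp n U m N"
  shows "eigen_decomp n U (\<lambda>i. l i * m i) (M * N)"
proof -
  have M: "M \<in> carrier_mat n n" and N: "N \<in> carrier_mat n n" and U: "unitary_fun n U"
    and Me: "\<And>a b. a<n \<Longrightarrow> b<n \<Longrightarrow> M $$ (a,b) = (\<Sum>i<n. U a i * of_real (l i) * cnj (U b i))"
    and Ne: "\<And>a b. a<n \<Longrightarrow> b<n \<Longrightarrow> N $$ (a,b) = (\<Sum>i<n. U a i * of_real (m i) * cnj (U b i))"
    and U1: "\<And>i j. i<n \<Longrightarrow> j<n \<Longrightarrow> (\<Sum>c<n. cnj (U c i) * U c j) = (if i=j then 1 else 0)"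
    using assms unfolding eigen_decomp_def unitary_fun_def by auto
  have "(M * N) $$ (a,b) = (\<Sum>i<n. U a i * of_real (l i * m i) * cnj (U b i))"
    if ab: "a < n" "b < n" for a b
  proof -
    have "(M * N) $$ (a,b) = (\<Sum>c<n. M $$ (a,c) * N $$ (c,b))"
      using ab M N by (simp add: scalar_prod_def atLeast0LessThan)
    also have "\<dots> = (\<Sum>c<n. \<Sum>i<n. \<Sum>j<n.
        U a i * of_real (l i) * of_real (m j) * cnj (U b j) * (cnj (U c i) * U c j))"
      using ab by (simp add: Me Ne sum_product mult_ac)
    also have "\<dots> = (\<Sum>i<n. \<Sum>j<n. \<Sum>c<n.
        U a i * of_real (l i) * of_real (m j) * cnj (U b j) * (cnj (U c i) * U c j))"
      by (subst sum.swap) (rule sum.cong[OF refl], rule sum.swap)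
    also have "\<dots> = (\<Sum>i<n. \<Sum>j<n.
        U a i * of_real (l i) * of_real (m j) * cnj (U b j) * (if i = j then 1 else 0))"
      by (intro sum.cong refl) (simp add: U1 flip: sum_distrib_left)
    also have "\<dots> = (\<Sum>i<n. U a i * of_real (l i * m i) * cnj (U b i))"
      by (intro sum.cong refl) (subst sum_mult_delta; simp add: mult_ac)
    finally show ?thesis .
  qed
  then show ?thesis using U M N unfolding eigen_decomp_def by auto
qed

lemma eigen_decomp_power:
  assumes "eigen_decomp n U l M"
  shows "eigen_decomp n U (\<lambda>i. l i ^ k) (M ^\<^sub>m k)"
proof (induction k)
  case 0
  have "dim_row M = n" using assms by (auto simp: eigen_decomp_def)
  then show ?case using eigen_decomp_one assms by (simp add: eigen_decomp_def)
next
  case (Suc k)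
  then show ?case using eigen_decomp_mult[OF Suc assms] by (simp add: mult.commute)
qed

lemma eigen_decomp_mat_exp:
  assumes "eigen_decomp n U l M"
  shows "eigen_decomp n U (\<lambda>i. exp (l i)) (mat_exp M)"
proof -
  have M: "M \<in> carrier_mat n n" using assms by (simp add: eigen_decomp_def)
  have "mat_exp M $$ (a,b) = (\<Sum>i<n. U a i * of_real (exp (l i)) * cnj (U b i))"
    if ab: "a < n" "b < n" for a b
  proof -
    have "mat_exp M $$ (a,b) = (\<Sum>k. (M ^\<^sub>m k) $$ (a,b) / of_nat (fact k))"
      using M ab by (simp add: mat_exp_def)
    also have "\<dots> = (\<Sum>k. \<Sum>i<n. U a i * cnj (U b i) * (of_real (l i) ^ k /\<^sub>R fact k))"
      using ab eigen_decomp_power[OF assms] unfolding eigen_decomp_def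
      by (simp add: sum_divide_distrib
          scaleR_conv_of_real divide_inverse mult_ac sum_distrib_left)
    also have "\<dots> = (\<Sum>i<n. U a i * cnj (U b i) * exp (of_real (l i)))"
      by (rule sums_unique[symmetric], rule sums_sum, rule sums_mult, rule exp_converges)
    also have "\<dots> = (\<Sum>i<n. U a i * of_real (exp (l i)) * cnj (U b i))"
      by (simp add: exp_of_real mult_ac)
    finally show ?thesis .
  qed
  then show ?thesis using assms M unfolding eigen_decomp_def by (auto simp: mat_exp_def)
qed

section \<open>The spectral theorem for Hermitian matrices\<close>

lemma cscalar_prod_self:
  assumes "x \<in> carrier_vec n"
  shows "x \<bullet>c x = complex_of_real (\<Sum>a<n. (cmod (x $ a))\<^sup>2)"
proof -
  have "x \<bullet>c x = (\<Sum>a<n. x $ a * cnj (x $ a))"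
    using assms by (simp add: scalar_prod_def atLeast0LessThan)
  also have "\<dots> = (\<Sum>a<n. complex_of_real ((cmod (x $ a))\<^sup>2))"
    by (intro sum.cong refl) (rule complex_norm_square[symmetric])
  finally show ?thesis by simp
qed

lemma unitary_fun_normalize:
  assumes orth: "corthogonal ws" and wsc: "set ws \<subseteq> carrier_vec n" and len: "length ws = n"
  defines "N k \<equiv> \<Sum>a<n. (cmod ((ws ! k) $ a))\<^sup>2"
  shows "unitary_fun n (\<lambda>a k. (ws ! k) $ a / complex_of_real (sqrt (N k)))"
    and "\<And>k. k < n \<Longrightarrow> N k > 0"
proof -
  have wsk: "k < n \<Longrightarrow> ws ! k \<in> carrier_vec n" for k using wsc len by auto
  have Neq: "k < n \<Longrightarrow> ws ! k \<bullet>c ws ! k = complex_of_real (N k)" for k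
    using cscalar_prod_self[OF wsk] by (simp add: N_def)
  show Npos: "N k > 0" if k: "k < n" for k
  proof -
    have "ws ! k \<bullet>c ws ! k \<noteq> 0" using corthogonalD[OF orth, of k k] k len by auto
    then have "N k \<noteq> 0" using Neq[OF k] by auto
    moreover have "N k \<ge> 0" by (simp add: N_def sum_nonneg)
    ultimately show ?thesis by simp
  qed
  show "unitary_fun n (\<lambda>a k. (ws ! k) $ a / complex_of_real (sqrt (N k)))"
  proof (rule unitary_funI)
    fix i j assume ij: "i < n" "j < n"
    have "(\<Sum>a<n. cnj ((ws ! i) $ a / complex_of_real (sqrt (N i))) * ((ws ! j) $ a / complex_of_real (sqrt (N j))))
        = (ws ! j \<bullet>c ws ! i) / (complex_of_real (sqrt (N i)) * complex_of_real (sqrt (N j)))"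
      using wsk[OF ij(1)] wsk[OF ij(2)]
      by (simp add: scalar_prod_def atLeast0LessThan sum_divide_distrib mult_ac)
    also have "\<dots> = (if i = j then 1 else 0)"
    proof (cases "i = j")
      case True
      have "complex_of_real (sqrt (N i)) * complex_of_real (sqrt (N i)) = complex_of_real (N i)"
        using Npos[OF ij(1)] by (simp flip: of_real_mult)
      then show ?thesis using True Neq[OF ij(1)] Npos[OF ij(1)] by simp
    next
      case False
      then have "ws ! j \<bullet>c ws ! i = 0" using corthogonalD[OF orth, of j i] ij len by auto
      then show ?thesis using False by simp
    qed
    finally show "(\<Sum>a<n. cnj ((ws ! i) $ a / complex_of_real (sqrt (N i))) *
        ((ws ! j) $ a / complex_of_real (sqrt (N j)))) = (if i = j then 1 else 0)" .
  qed
qed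

text \<open>Complete v to a basis and apply Gram-Schmidt, which keeps the first vector.\<close>

lemma unitary_fun_first_col:
  fixes v :: "complex vec"
  assumes v: "v \<in> carrier_vec n" and v0: "v \<noteq> 0\<^sub>v n"
  obtains W k where "unitary_fun n W" "\<And>a. a < n \<Longrightarrow> W a 0 = k * v $ a"
proof -
  interpret cof_vec_space n "TYPE(complex)" .
  define b where "b = basis_completion v"
  define ws where "ws = gram_schmidt n b"
  from basis_completion[OF v v0, folded b_def]
  have dist_b: "distinct b" and indep: "\<not> lin_dep (set b)" and bc: "set b \<subseteq> carrier_vec n"
    and hdb: "hd b = v" and len_b: "length b = n" by auto
  have n: "n \<noteq> 0" using v0 v by auto
  from hdb len_b n obtain vs where bv: "b = v # vs" by (cases b, auto)
  from gram_schmidt_result[OF bc dist_b indep refl, folded ws_def]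
  have orth: "corthogonal ws" and wsc: "set ws \<subseteq> carrier_vec n" and len: "length ws = n"
    by (auto simp: len_b)
  from gram_schmidt_hd[OF v, of vs, folded bv] have "hd ws = v" unfolding ws_def .
  then have ws0: "ws ! 0 = v" using len n by (cases ws) auto
  show ?thesis
    by (rule that[OF unitary_fun_normalize(1)[OF orth wsc len],
          where k = "1 / complex_of_real (sqrt (\<Sum>a<n. (cmod (v $ a))\<^sup>2))"]) (simp add: ws0)
qed

lemma eigenvalue_exists:
  fixes A :: "complex mat"
  assumes "A \<in> carrier_mat n n" "n > 0"
  obtains e where "eigenvalue A e"
proof -
  have deg: "degree (char_poly A) = n" using degree_monic_char_poly[OF assms(1)] by simp
  then have nz: "char_poly A \<noteq> 0" using assms(2) by auto
  have "size (proots (char_poly A)) = n" using size_proots_complex deg by simp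
  then obtain e where "e \<in># proots (char_poly A)" using assms(2)
    by (metis gr_implies_not0 multiset_nonemptyE size_empty)
  then have "poly (char_poly A) e = 0" using nz by simp
  then show ?thesis using eigenvalue_root_char_poly[OF assms(1)] that by blast
qed

lemma unitary_conj_eigenvector:
  assumes A: "A \<in> carrier_mat n n" and n: "n > 0"
  obtains W e where "unitary_fun n W"
    "\<And>c. c < n \<Longrightarrow> unitary_conj n W (\<lambda>x y. A $$ (x,y)) c 0 = e * (if c = 0 then 1 else 0)"
proof -
  obtain e where e: "eigenvalue A e" using eigenvalue_exists[OF A n] .
  define v where "v = find_eigenvector A e"
  have "eigenvector A v e" unfolding v_def by (rule find_eigenvector[OF A e])
  then have vc: "v \<in> carrier_vec n" and v0: "v \<noteq> 0\<^sub>v n" and Av: "A *\<^sub>v v = e \<cdot>\<^sub>v v"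
    using A unfolding eigenvector_def by auto
  obtain W k where W: "unitary_fun n W" and W0: "\<And>a. a < n \<Longrightarrow> W a 0 = k * v $ a"
    using unitary_fun_first_col[OF vc v0] by blast
  have AW0: "(\<Sum>y<n. A $$ (x,y) * W y 0) = e * W x 0" if "x < n" for x
  proof -
    have "(A *\<^sub>v v) $ x = (\<Sum>y<n. A $$ (x,y) * v $ y)"
      using that A vc by (simp add: scalar_prod_def atLeast0LessThan)
    then have "(\<Sum>y<n. A $$ (x,y) * v $ y) = e * v $ x" using Av that vc by simp
    moreover have "(\<Sum>y<n. A $$ (x,y) * W y 0) = k * (\<Sum>y<n. A $$ (x,y) * v $ y)"
      unfolding sum_distrib_left by (intro sum.cong refl) (simp add: W0)
    ultimately show ?thesis using that W0 by simp
  qed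
  have "unitary_conj n W (\<lambda>x y. A $$ (x,y)) c 0 = e * (if c = 0 then 1 else 0)" if c: "c < n" for c
  proof -
    have "unitary_conj n W (\<lambda>x y. A $$ (x,y)) c 0 = (\<Sum>x<n. cnj (W x c) * (\<Sum>y<n. A $$ (x,y) * W y 0))"
      by (simp add: unitary_conj_def sum_distrib_left mult_ac)
    also have "\<dots> = (\<Sum>x<n. cnj (W x c) * (e * W x 0))"
      by (intro sum.cong refl) (simp add: AW0)
    also have "\<dots> = e * (\<Sum>x<n. cnj (W x c) * W x 0)"
      by (simp add: sum_distrib_left mult_ac)
    also have "\<dots> = e * (if c = 0 then 1 else 0)"
      using W c n unfolding unitary_fun_def by simp
    finally show ?thesis .
  qed
  with W show ?thesis by (rule that)
qed

lemma unitary_conj_hermitian: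
  assumes "hermitian_mat n A" "c < n" "d < n"
  shows "unitary_conj n W (\<lambda>x y. A $$ (x,y)) d c = cnj (unitary_conj n W (\<lambda>x y. A $$ (x,y)) c d)"
proof -
  have "cnj (unitary_conj n W (\<lambda>x y. A $$ (x,y)) c d) = (\<Sum>x<n. \<Sum>y<n. W x c * cnj (A $$ (x,y)) * cnj (W y d))"
    unfolding unitary_conj_def by simp
  also have "\<dots> = (\<Sum>x<n. \<Sum>y<n. W x c * A $$ (y,x) * cnj (W y d))"
    by (intro sum.cong refl) (metis hermitian_mat_entry[OF assms(1)] lessThan_iff)
  also have "\<dots> = unitary_conj n W (\<lambda>x y. A $$ (x,y)) d c"
    unfolding unitary_conj_def by (subst sum.swap) (simp add: mult_ac)
  finally show ?thesis by simp
qed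

lemma block_eigen_decomp:
  fixes B :: "nat \<Rightarrow> nat \<Rightarrow> complex"
  assumes sp: "eigen_decomp m U3 l3 A3"
    and B00: "B 0 0 = complex_of_real e"
    and B0: "\<And>c. 0 < c \<Longrightarrow> c < Suc m \<Longrightarrow> B c 0 = 0 \<and> B 0 c = 0"
    and BS: "\<And>c d. c < m \<Longrightarrow> d < m \<Longrightarrow> B (Suc c) (Suc d) = A3 $$ (c,d)"
  obtains V L where "unitary_fun (Suc m) V"
    "\<And>c d. c < Suc m \<Longrightarrow> d < Suc m \<Longrightarrow> B c d = (\<Sum>i<Suc m. V c i * complex_of_real (L i) * cnj (V d i))"
proof
  have U31: "\<And>c d. c < m \<Longrightarrow> d < m \<Longrightarrow> (\<Sum>a<m. cnj (U3 a c) * U3 a d) = (if c = d then 1 else 0)"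
    and A3e: "\<And>a b. a<m \<Longrightarrow> b<m \<Longrightarrow> A3 $$ (a,b) = (\<Sum>i<m. U3 a i * of_real (l3 i) * cnj (U3 b i))"
    using sp unfolding eigen_decomp_def unitary_fun_def by auto
  define V where "V c i = (if c = 0 then (if i = 0 then 1 else 0)
    else if i = 0 then 0 else U3 (c - 1) (i - 1))" for c i
  define L where "L i = (if i = 0 then e else l3 (i - 1))" for i
  show "unitary_fun (Suc m) V"
  proof (rule unitary_funI)
    fix i j assume ij: "i < Suc m" "j < Suc m"
    show "(\<Sum>a<Suc m. cnj (V a i) * V a j) = (if i = j then 1 else 0)"
    proof (cases "i = 0 \<or> j = 0")
      case True
      then show ?thesis by (subst sum.lessThan_Suc_shift) (auto simp: V_def)
    next
      case False
      then obtain i' j' where "i = Suc i'" "j = Suc j'" by (auto simp: gr0_conv_Suc)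
      then show ?thesis using ij U31[of i' j'] by (subst sum.lessThan_Suc_shift) (simp add: V_def)
    qed
  qed
  show "B c d = (\<Sum>i<Suc m. V c i * complex_of_real (L i) * cnj (V d i))"
    if cd: "c < Suc m" "d < Suc m" for c d
  proof (cases "c = 0 \<or> d = 0")
    case True
    then show ?thesis using B00 B0 cd by (subst sum.lessThan_Suc_shift) (auto simp: V_def L_def)
  next
    case False
    then obtain c' d' where "c = Suc c'" "d = Suc d'" by (auto simp: gr0_conv_Suc)
    then show ?thesis using cd BS A3e by (subst sum.lessThan_Suc_shift) (simp add: V_def L_def)
  qed
qed

lemma eigen_decomp_unitary_conj:
  assumes A: "A \<in> carrier_mat n n" and W: "unitary_fun n W" and V: "unitary_fun n V"
    and AV: "\<And>c d. c < n \<Longrightarrow> d < n \<Longrightarrow>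
      unitary_conj n W (\<lambda>x y. A $$ (x,y)) c d = (\<Sum>i<n. V c i * complex_of_real (L i) * cnj (V d i))"
  shows "eigen_decomp n (\<lambda>a i. \<Sum>c<n. W a c * V c i) L A"
proof -
  have "A $$ (a,b) = (\<Sum>i<n. (\<Sum>c<n. W a c * V c i) * complex_of_real (L i) * cnj (\<Sum>d<n. W b d * V d i))"
    if ab: "a < n" "b < n" for a b
  proof -
    have "A $$ (a,b) = (\<Sum>c<n. \<Sum>d<n. W a c * unitary_conj n W (\<lambda>x y. A $$ (x,y)) c d * cnj (W b d))"
      by (rule unitary_conj_cancel[OF W ab, symmetric])
    also have "\<dots> = (\<Sum>c<n. \<Sum>d<n. W a c *
        (\<Sum>i<n. V c i * complex_of_real (L i) * cnj (V d i)) * cnj (W b d))"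
      by (intro sum.cong refl) (simp add: AV)
    also have "\<dots> = (\<Sum>i<n. (\<Sum>c<n. W a c * V c i) * complex_of_real (L i) * cnj (\<Sum>d<n. W b d * V d i))"
      by (rule unitary_conj_diag)
    finally show ?thesis .
  qed
  then show ?thesis using A unitary_fun_mult[OF W V] unfolding eigen_decomp_def by auto
qed

text \<open>Conjugating by a unitary whose first column is an eigenvector splits off a 1 \<times> 1 block.\<close>

lemma hermitian_deflation:
  assumes "hermitian_mat (Suc m) A"
  obtains W A3 e where "unitary_fun (Suc m) W" "hermitian_mat m A3"
    "unitary_conj (Suc m) W (\<lambda>x y. A $$ (x,y)) 0 0 = complex_of_real e"
    "\<And>c. 0 < c \<Longrightarrow> c < Suc m \<Longrightarrow>
      unitary_conj (Suc m) W (\<lambda>x y. A $$ (x,y)) c 0 = 0 \<and> unitary_conj (Suc m) W (\<lambda>x y. A $$ (x,y)) 0 c = 0"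
    "\<And>c d. c < m \<Longrightarrow> d < m \<Longrightarrow> unitary_conj (Suc m) W (\<lambda>x y. A $$ (x,y)) (Suc c) (Suc d) = A3 $$ (c,d)"
proof -
  have Ac: "A \<in> carrier_mat (Suc m) (Suc m)" using assms unfolding hermitian_mat_def by auto
  obtain W e where W: "unitary_fun (Suc m) W"
    and col0: "\<And>c. c < Suc m \<Longrightarrow> unitary_conj (Suc m) W (\<lambda>x y. A $$ (x,y)) c 0 = e * (if c = 0 then 1 else 0)"
    using unitary_conj_eigenvector[OF Ac] by blast
  define B where "B = unitary_conj (Suc m) W (\<lambda>x y. A $$ (x,y))"
  have Bh: "B d c = cnj (B c d)" if "c < Suc m" "d < Suc m" for c d
    unfolding B_def by (rule unitary_conj_hermitian[OF assms that])
  have "e = complex_of_real (Re e)"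
    using Bh[of 0 0] col0[of 0] unfolding B_def by (simp add: complex_eq_iff)
  then have B00: "B 0 0 = complex_of_real (Re e)" using col0[of 0] by (simp add: B_def)
  have B0: "B c 0 = 0 \<and> B 0 c = 0" if "0 < c" "c < Suc m" for c
    using col0[OF that(2)] Bh[OF that(2), of 0] that unfolding B_def by simp
  define A3 where "A3 = mat m m (\<lambda>(i,j). B (Suc i) (Suc j))"
  have "hermitian_mat m A3"
    unfolding hermitian_mat_def
  proof (intro conjI eq_matI)
    fix i j assume "i < dim_row A3" "j < dim_col A3"
    then show "mat_adjoint A3 $$ (i,j) = A3 $$ (i,j)"
      using Bh[of "Suc j" "Suc i"] by (simp add: A3_def mat_adjoint_index)
  qed (auto simp: A3_def mat_adjoint_index)
  moreover have "B (Suc c) (Suc d) = A3 $$ (c,d)" if "c < m" "d < m" for c d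
    using that by (simp add: A3_def)
  ultimately show ?thesis
    using that[OF W] B00 B0 unfolding B_def by blast
qed

theorem hermitian_eigen_decomp_exists:
  assumes "hermitian_mat n A"
  shows "\<exists>U l. eigen_decomp n U l A"
  using assms
proof (induction n arbitrary: A)
  case 0
  then show ?case unfolding eigen_decomp_def unitary_fun_def hermitian_mat_def by auto
next
  case (Suc m)
  obtain W A3 e where W: "unitary_fun (Suc m) W" and A3: "hermitian_mat m A3"
    and block: "unitary_conj (Suc m) W (\<lambda>x y. A $$ (x,y)) 0 0 = complex_of_real e"
      "\<And>c. 0 < c \<Longrightarrow> c < Suc m \<Longrightarrow>
        unitary_conj (Suc m) W (\<lambda>x y. A $$ (x,y)) c 0 = 0 \<and> unitary_conj (Suc m) W (\<lambda>x y. A $$ (x,y)) 0 c = 0"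
      "\<And>c d. c < m \<Longrightarrow> d < m \<Longrightarrow> unitary_conj (Suc m) W (\<lambda>x y. A $$ (x,y)) (Suc c) (Suc d) = A3 $$ (c,d)"
    using hermitian_deflation[OF Suc.prems] by blast
  obtain U3 l3 where "eigen_decomp m U3 l3 A3" using Suc.IH[OF A3] by blast
  then obtain V L where "unitary_fun (Suc m) V" "\<And>c d. c < Suc m \<Longrightarrow> d < Suc m \<Longrightarrow>
      unitary_conj (Suc m) W (\<lambda>x y. A $$ (x,y)) c d = (\<Sum>i<Suc m. V c i * complex_of_real (L i) * cnj (V d i))"
    using block_eigen_decomp[where B = "unitary_conj (Suc m) W (\<lambda>x y. A $$ (x,y))", OF _ block] by blast
  moreover have "A \<in> carrier_mat (Suc m) (Suc m)" using Suc.prems by (simp add: hermitian_mat_def)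
  ultimately show ?case using eigen_decomp_unitary_conj[OF _ W] by blast
qed

section \<open>Gibbs inequality\<close>

lemma xlogx_ge_tangent:
  assumes "p \<ge> 0" "t > 0"
  shows "xlogx p \<ge> p * ln t + p - t"
proof (cases "p = 0")
  case True then show ?thesis using assms by (simp add: xlogx_def)
next
  case False
  then have p: "p > 0" using assms by simp
  have "ln (t/p) \<le> t/p - 1" using p assms by (intro ln_le_minus_one) simp
  then have "p * ln (t/p) \<le> p * (t/p - 1)" using p by (intro mult_left_mono) auto
  then have "p * (ln t - ln p) \<le> t - p" using p assms by (simp add: ln_div right_diff_distrib)
  then show ?thesis using False by (simp add: xlogx_def algebra_simps)
qed

lemma xlogx_gt_tangent:
  assumes "p \<ge> 0" "t > 0" "p \<noteq> t"
  shows "xlogx p > p * ln t + p - t"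
proof (cases "p = 0")
  case True then show ?thesis using assms by (simp add: xlogx_def)
next
  case False
  then have p: "p > 0" using assms by simp
  have "ln (t/p) \<noteq> t/p - 1"
  proof
    assume "ln (t/p) = t/p - 1"
    then have "t/p = 1" using p assms by (intro ln_eq_minus_one) auto
    then show False using p assms by simp
  qed
  moreover have "ln (t/p) \<le> t/p - 1" using p assms by (intro ln_le_minus_one) simp
  ultimately have "p * ln (t/p) < p * (t/p - 1)" using p by (intro mult_strict_left_mono) auto
  then have "p * (ln t - ln p) < t - p" using p assms by (simp add: ln_div right_diff_distrib)
  then show ?thesis using False by (simp add: xlogx_def algebra_simps)
qed

lemma gibbs_inequality:
  assumes "finite A" "\<And>j. j \<in> A \<Longrightarrow> p j \<ge> 0" "sum p A = 1"
    and "\<And>j. j \<in> A \<Longrightarrow> t j > 0" "sum t A \<le> 1"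
  shows "(\<Sum>j\<in>A. p j * ln (t j)) \<le> (\<Sum>j\<in>A. xlogx (p j))"
proof -
  have "(\<Sum>j\<in>A. p j * ln (t j)) + sum p A - sum t A = (\<Sum>j\<in>A. p j * ln (t j) + p j - t j)"
    by (simp add: sum.distrib sum_subtractf)
  also have "\<dots> \<le> (\<Sum>j\<in>A. xlogx (p j))"
    using assms by (intro sum_mono xlogx_ge_tangent) auto
  finally show ?thesis using assms(3,5) by simp
qed

lemma gibbs_inequality_strict:
  assumes "finite A" "\<And>j. j \<in> A \<Longrightarrow> p j \<ge> 0" "sum p A = 1"
    and "\<And>j. j \<in> A \<Longrightarrow> t j > 0" "sum t A = 1" "\<exists>j\<in>A. p j \<noteq> t j"
  shows "(\<Sum>j\<in>A. p j * ln (t j)) < (\<Sum>j\<in>A. xlogx (p j))"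
proof -
  obtain k where k: "k \<in> A" "p k \<noteq> t k" using assms(6) by blast
  have "(\<Sum>j\<in>A. p j * ln (t j) + p j - t j) < (\<Sum>j\<in>A. xlogx (p j))"
  proof (rule sum_strict_mono_ex1)
    show "\<forall>j\<in>A. p j * ln (t j) + p j - t j \<le> xlogx (p j)"
      using assms by (auto intro: xlogx_ge_tangent)
    show "\<exists>j\<in>A. p j * ln (t j) + p j - t j < xlogx (p j)"
      using k assms by (intro bexI[of _ k] xlogx_gt_tangent) auto
  qed (use assms in auto)
  then show ?thesis using assms(3,5) by (simp add: sum.distrib sum_subtractf)
qed

lemma exp_convex_sum:
  fixes c y :: "'a \<Rightarrow> real"
  assumes "(\<Sum>i\<in>A. c i) = 1" "\<And>i. i \<in> A \<Longrightarrow> c i \<ge> 0"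
  shows "exp (\<Sum>i\<in>A. c i * y i) \<le> (\<Sum>i\<in>A. c i * exp (y i))"
proof -
  define m where "m = (\<Sum>i\<in>A. c i * y i)"
  have "exp m = exp m * ((\<Sum>i\<in>A. c i) + (\<Sum>i\<in>A. c i * y i) - m * (\<Sum>i\<in>A. c i))"
    using assms(1) by (simp add: m_def)
  also have "\<dots> = (\<Sum>i\<in>A. exp m * (c i * (1 + (y i - m))))"
    by (simp add: sum_distrib_left sum.distrib sum_subtractf algebra_simps)
  also have "\<dots> \<le> (\<Sum>i\<in>A. exp m * (c i * exp (y i - m)))"
    using assms(2) by (intro sum_mono mult_left_mono) auto
  also have "\<dots> = (\<Sum>i\<in>A. c i * exp (y i))"
    by (intro sum.cong refl) (simp add: exp_diff)
  finally show ?thesis by (simp add: m_def)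
qed

definition partition_fun :: "nat \<Rightarrow> (nat \<Rightarrow> real) \<Rightarrow> real \<Rightarrow> real" where
  "partition_fun n h \<beta> = (\<Sum>k<n. exp (- \<beta> * h k))"

definition gibbs_weight :: "nat \<Rightarrow> (nat \<Rightarrow> real) \<Rightarrow> real \<Rightarrow> nat \<Rightarrow> real" where
  "gibbs_weight n h \<beta> i = exp (- \<beta> * h i) / partition_fun n h \<beta>"

definition gibbs_entropy :: "nat \<Rightarrow> (nat \<Rightarrow> real) \<Rightarrow> real \<Rightarrow> real" where
  "gibbs_entropy n h \<beta> = \<beta> * (\<Sum>i<n. h i * gibbs_weight n h \<beta> i) + ln (partition_fun n h \<beta>)"

lemma partition_fun_pos: "n > 0 \<Longrightarrow> partition_fun n h \<beta> > 0"
  unfolding partition_fun_def by (intro sum_pos) auto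

lemma gibbs_weight_pos: "n > 0 \<Longrightarrow> gibbs_weight n h \<beta> i > 0"
  using partition_fun_pos by (simp add: gibbs_weight_def)

lemma sum_gibbs_weight: "n > 0 \<Longrightarrow> (\<Sum>i<n. gibbs_weight n h \<beta> i) = 1"
  using partition_fun_pos[of n h \<beta>]
  by (simp add: gibbs_weight_def partition_fun_def flip: sum_divide_distrib)

lemma sum_mult_ln_gibbs_weight:
  assumes "n > 0" "(\<Sum>j<n. p j) = 1"
  shows "(\<Sum>j<n. p j * ln (gibbs_weight n h \<beta> j)) = - \<beta> * (\<Sum>j<n. h j * p j) - ln (partition_fun n h \<beta>)"
proof -
  have ln_weight: "ln (gibbs_weight n h \<beta> j) = - \<beta> * h j - ln (partition_fun n h \<beta>)" for j
    using partition_fun_pos[OF assms(1), of h \<beta>] by (simp add: gibbs_weight_def ln_div)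
  have "(\<Sum>j<n. p j * ln (gibbs_weight n h \<beta> j))
      = (\<Sum>j<n. \<beta> * (h j * p j) * (-1) - ln (partition_fun n h \<beta>) * p j)"
    unfolding ln_weight by (simp add: algebra_simps)
  also have "\<dots> = - \<beta> * (\<Sum>j<n. h j * p j) - ln (partition_fun n h \<beta>) * (\<Sum>j<n. p j)"
    by (simp add: sum_subtractf sum_distrib_left flip: sum_distrib_right)
  finally show ?thesis using assms(2) by simp
qed

lemma sum_xlogx_gibbs_weight:
  assumes "n > 0"
  shows "(\<Sum>i<n. xlogx (gibbs_weight n h \<beta> i)) = - gibbs_entropy n h \<beta>"
proof -
  have "(\<Sum>i<n. xlogx (gibbs_weight n h \<beta> i)) = (\<Sum>i<n. gibbs_weight n h \<beta> i * ln (gibbs_weight n h \<beta> i))"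
    using gibbs_weight_pos[OF assms] by (intro sum.cong refl) (simp add: xlogx_def)
  then show ?thesis
    using sum_mult_ln_gibbs_weight[OF assms sum_gibbs_weight[OF assms]] by (simp add: gibbs_entropy_def)
qed

lemma gibbs_variational:
  assumes "\<And>j. j < n \<Longrightarrow> p j \<ge> 0" "(\<Sum>j<n. p j) = 1"
  shows "(\<Sum>j<n. xlogx (p j)) + \<beta> * (\<Sum>j<n. h j * p j) \<ge> - ln (partition_fun n h \<beta>)"
proof -
  have n: "n > 0" using assms(2) by (cases n) auto
  have "(\<Sum>j<n. p j * ln (gibbs_weight n h \<beta> j)) \<le> (\<Sum>j<n. xlogx (p j))"
    using assms gibbs_weight_pos[OF n] sum_gibbs_weight[OF n] by (intro gibbs_inequality) auto
  then show ?thesis using sum_mult_ln_gibbs_weight[OF n assms(2)] by simp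
qed

lemma gibbs_variational_strict:
  assumes "\<And>j. j < n \<Longrightarrow> p j \<ge> 0" "(\<Sum>j<n. p j) = 1" "\<exists>j<n. p j \<noteq> gibbs_weight n h \<beta> j"
  shows "(\<Sum>j<n. xlogx (p j)) + \<beta> * (\<Sum>j<n. h j * p j) > - ln (partition_fun n h \<beta>)"
proof -
  have n: "n > 0" using assms(2) by (cases n) auto
  have "(\<Sum>j<n. p j * ln (gibbs_weight n h \<beta> j)) < (\<Sum>j<n. xlogx (p j))"
    using assms gibbs_weight_pos[OF n] sum_gibbs_weight[OF n] by (intro gibbs_inequality_strict) auto
  then show ?thesis using sum_mult_ln_gibbs_weight[OF n assms(2)] by simp
qed

lemma partition_fun_doubly_stochastic_le:
  assumes "\<And>i j. i < n \<Longrightarrow> j < n \<Longrightarrow> c i j \<ge> 0"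
    and "\<And>j. j < n \<Longrightarrow> (\<Sum>i<n. c i j) = 1" "\<And>i. i < n \<Longrightarrow> (\<Sum>j<n. c i j) = 1"
  shows "partition_fun n (\<lambda>j. \<Sum>i<n. c i j * h i) \<beta> \<le> partition_fun n h \<beta>"
proof -
  have "exp (- \<beta> * (\<Sum>i<n. c i j * h i)) \<le> (\<Sum>i<n. c i j * exp (- \<beta> * h i))" if "j < n" for j
  proof -
    have "exp (- \<beta> * (\<Sum>i<n. c i j * h i)) = exp (\<Sum>i<n. c i j * (- \<beta> * h i))"
      by (simp add: sum_distrib_left algebra_simps)
    also have "\<dots> \<le> (\<Sum>i<n. c i j * exp (- \<beta> * h i))"
      using that assms(1,2) by (intro exp_convex_sum) auto
    finally show ?thesis .
  qed
  then have "partition_fun n (\<lambda>j. \<Sum>i<n. c i j * h i) \<beta> \<le> (\<Sum>j<n. \<Sum>i<n. c i j * exp (- \<beta> * h i))"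
    unfolding partition_fun_def by (intro sum_mono) auto
  also have "\<dots> = (\<Sum>i<n. (\<Sum>j<n. c i j) * exp (- \<beta> * h i))"
    by (subst sum.swap) (simp add: sum_distrib_right)
  also have "\<dots> = partition_fun n h \<beta>" using assms(3) by (simp add: partition_fun_def)
  finally show ?thesis .
qed

lemma gibbs_variational_doubly_stochastic:
  assumes "\<And>j. j < n \<Longrightarrow> p j \<ge> 0" "(\<Sum>j<n. p j) = 1"
    and "\<And>i j. i < n \<Longrightarrow> j < n \<Longrightarrow> c i j \<ge> 0"
    and "\<And>j. j < n \<Longrightarrow> (\<Sum>i<n. c i j) = 1" "\<And>i. i < n \<Longrightarrow> (\<Sum>j<n. c i j) = 1"
  shows "(\<Sum>j<n. xlogx (p j)) + \<beta> * (\<Sum>i<n. \<Sum>j<n. h i * p j * c i j) \<ge> - ln (partition_fun n h \<beta>)"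
proof -
  define a where "a j = (\<Sum>i<n. c i j * h i)" for j
  have n: "n > 0" using assms(2) by (cases n) auto
  have "partition_fun n a \<beta> \<le> partition_fun n h \<beta>"
    unfolding a_def by (rule partition_fun_doubly_stochastic_le[OF assms(3-5)])
  then have "- ln (partition_fun n h \<beta>) \<le> - ln (partition_fun n a \<beta>)"
    using partition_fun_pos[OF n, of a \<beta>] by simp
  also have "\<dots> \<le> (\<Sum>j<n. xlogx (p j)) + \<beta> * (\<Sum>j<n. a j * p j)"
    by (rule gibbs_variational[OF assms(1,2)])
  also have "(\<Sum>j<n. a j * p j) = (\<Sum>i<n. \<Sum>j<n. h i * p j * c i j)"
    unfolding a_def by (subst sum.swap) (simp add: sum_distrib_left sum_distrib_right mult_ac)
  finally show ?thesis .
qed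

lemma gibbs_entropy_0: "n > 0 \<Longrightarrow> gibbs_entropy n h 0 = ln n"
  by (simp add: gibbs_entropy_def partition_fun_def)

lemma gibbs_entropy_pos:
  assumes "i < n" "j < n" "i \<noteq> j"
  shows "gibbs_entropy n h \<beta> > 0"
proof -
  have n: "n > 0" using assms by simp
  have less_1: "gibbs_weight n h \<beta> k < 1" if "k < n" for k
  proof -
    obtain k' where k': "k' < n" "k' \<noteq> k" using assms by (cases "k = i") auto
    have "gibbs_weight n h \<beta> k + gibbs_weight n h \<beta> k' = (\<Sum>x\<in>{k,k'}. gibbs_weight n h \<beta> x)"
      using k' by simp
    also have "\<dots> \<le> (\<Sum>x<n. gibbs_weight n h \<beta> x)"
      using that k' gibbs_weight_pos[OF n] by (intro sum_mono2) (auto intro: less_imp_le)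
    finally show ?thesis using sum_gibbs_weight[OF n] gibbs_weight_pos[OF n, of h \<beta> k'] by simp
  qed
  have "xlogx (gibbs_weight n h \<beta> k) < 0" if "k < n" for k
    using less_1[OF that] gibbs_weight_pos[OF n, of h \<beta> k] by (simp add: xlogx_def mult_pos_neg)
  then have "(\<Sum>k<n. xlogx (gibbs_weight n h \<beta> k)) < (\<Sum>k<n. 0)"
    using n by (intro sum_strict_mono) auto
  then show ?thesis using sum_xlogx_gibbs_weight[OF n, of h \<beta>] by simp
qed

lemma gibbs_weight_neq:
  assumes "i < n" "j < n" "h i \<noteq> h j" "\<beta>1 \<noteq> \<beta>2"
  shows "\<exists>k<n. gibbs_weight n h \<beta>1 k \<noteq> gibbs_weight n h \<beta>2 k"
proof (rule ccontr)
  assume "\<not> ?thesis"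
  then have "gibbs_weight n h \<beta>1 i / gibbs_weight n h \<beta>1 j = gibbs_weight n h \<beta>2 i / gibbs_weight n h \<beta>2 j"
    using assms by auto
  then have "exp (- \<beta>1 * h i) / exp (- \<beta>1 * h j) = exp (- \<beta>2 * h i) / exp (- \<beta>2 * h j)"
    using partition_fun_pos[of n h \<beta>1] partition_fun_pos[of n h \<beta>2] assms by (simp add: gibbs_weight_def)
  then have "- \<beta>1 * h i - - \<beta>1 * h j = - \<beta>2 * h i - - \<beta>2 * h j"
    by (simp only: exp_inj_iff flip: exp_diff)
  then have "(\<beta>1 - \<beta>2) * (h i - h j) = 0" by (simp add: algebra_simps)
  then show False using assms by simp
qed

lemma gibbs_entropy_strict_decreasing:
  assumes "i < n" "j < n" "h i \<noteq> h j" "0 \<le> \<beta>1" "\<beta>1 < \<beta>2"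
  shows "gibbs_entropy n h \<beta>2 < gibbs_entropy n h \<beta>1"
proof -
  have n: "n > 0" using assms by simp
  define E1 where "E1 = (\<Sum>i<n. h i * gibbs_weight n h \<beta>1 i)"
  define E2 where "E2 = (\<Sum>i<n. h i * gibbs_weight n h \<beta>2 i)"
  define L1 where "L1 = ln (partition_fun n h \<beta>1)"
  define L2 where "L2 = ln (partition_fun n h \<beta>2)"
  have weights: "\<And>\<beta> j. j < n \<Longrightarrow> gibbs_weight n h \<beta> j \<ge> 0" "\<And>\<beta>. (\<Sum>j<n. gibbs_weight n h \<beta> j) = 1"
    using gibbs_weight_pos[OF n] sum_gibbs_weight[OF n] by (auto intro: less_imp_le)
  have "- gibbs_entropy n h \<beta>2 + \<beta>1 * E2 > - L1"
    using gibbs_variational_strict[of n "gibbs_weight n h \<beta>2" h \<beta>1] weights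
      gibbs_weight_neq[OF assms(1-3), of \<beta>2 \<beta>1] assms(5)
    by (simp add: sum_xlogx_gibbs_weight[OF n] E2_def L1_def)
  then have strict: "- \<beta>2 * E2 - L2 + \<beta>1 * E2 > - L1"
    by (simp add: gibbs_entropy_def E2_def L2_def)
  have "- gibbs_entropy n h \<beta>1 + \<beta>2 * E1 \<ge> - L2"
    using gibbs_variational[of n "gibbs_weight n h \<beta>1" h \<beta>2] weights
    by (simp add: sum_xlogx_gibbs_weight[OF n] E1_def L2_def)
  then have weak: "- \<beta>1 * E1 - L1 + \<beta>2 * E1 \<ge> - L2"
    by (simp add: gibbs_entropy_def E1_def L1_def)
  have "(\<beta>2 - \<beta>1) * (E1 - E2) > 0" using strict weak by (simp add: algebra_simps)
  then have "E1 - E2 > 0" using assms(5) by (simp add: zero_less_mult_iff)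
  then have "\<beta>1 * (E1 - E2) \<ge> 0" using assms(4) by simp
  then show ?thesis using strict
    unfolding gibbs_entropy_def E1_def[symmetric] E2_def[symmetric] L1_def[symmetric] L2_def[symmetric]
    by (simp add: algebra_simps)
qed

lemma continuous_on_gibbs_entropy:
  assumes "n > 0"
  shows "continuous_on S (gibbs_entropy n h)"
proof -
  have "continuous_on S (\<lambda>\<beta>. partition_fun n h \<beta>)" unfolding partition_fun_def by (intro continuous_intros)
  moreover have "\<forall>\<beta>\<in>S. partition_fun n h \<beta> \<noteq> 0" using partition_fun_pos[OF assms] by (metis less_irrefl)
  ultimately have "continuous_on S (\<lambda>\<beta>. \<beta> * (\<Sum>i<n. h i * (exp (- \<beta> * h i) / partition_fun n h \<beta>))
      + ln (partition_fun n h \<beta>))"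
    by (intro continuous_intros continuous_on_ln) auto
  then show ?thesis by (simp add: gibbs_entropy_def gibbs_weight_def)
qed

text \<open>Measuring energies from the ground level h i0, the partition function is 1 + T with T the
  sum of the Boltzmann factors of the excited levels, and ln (1 + T) \<le> T.\<close>

lemma gibbs_entropy_le:
  assumes i0: "i0 < n" and gt: "\<forall>i<n. i \<noteq> i0 \<longrightarrow> h i > h i0" and \<beta>: "\<beta> \<ge> 0"
  shows "gibbs_entropy n h \<beta> \<le> (\<Sum>i\<in>{..<n} - {i0}. (1 + \<beta> * (h i - h i0)) * exp (- \<beta> * (h i - h i0)))"
proof -
  define x where "x i = h i - h i0" for i
  define A where "A = {..<n} - {i0}"
  define T where "T = (\<Sum>i\<in>A. exp (- \<beta> * x i))"
  have n: "n > 0" using i0 by simp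
  have x0: "x i0 = 0" by (simp add: x_def)
  have xpos: "i \<in> A \<Longrightarrow> x i > 0" for i using gt by (auto simp: A_def x_def)
  have T0: "T \<ge> 0" by (simp add: T_def sum_nonneg)
  have Y: "(\<Sum>i<n. exp (- \<beta> * x i)) = 1 + T"
    unfolding T_def A_def using i0 x0 by (simp add: sum.remove[of "{..<n}" i0])
  have Z: "partition_fun n h \<beta> = exp (- \<beta> * h i0) * (1 + T)"
    unfolding partition_fun_def Y[symmetric] sum_distrib_left
    by (intro sum.cong refl) (simp add: x_def algebra_simps flip: exp_add)
  have weight: "gibbs_weight n h \<beta> i = exp (- \<beta> * x i) / (1 + T)" for i
  proof -
    have "exp (- \<beta> * h i) = exp (- \<beta> * h i0) * exp (- \<beta> * x i)"
      by (simp add: x_def algebra_simps flip: exp_add)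
    then show ?thesis unfolding gibbs_weight_def Z by simp
  qed
  have ln_Z: "ln (partition_fun n h \<beta>) = - \<beta> * h i0 + ln (1 + T)"
    using T0 by (simp add: Z ln_mult)
  have ln_T: "ln (1 + T) \<le> T" using ln_le_minus_one[of "1 + T"] T0 by simp
  have "(\<Sum>i<n. h i * gibbs_weight n h \<beta> i) = (\<Sum>i<n. h i0 * gibbs_weight n h \<beta> i + x i * gibbs_weight n h \<beta> i)"
    by (intro sum.cong refl) (simp add: x_def algebra_simps)
  also have "\<dots> = h i0 + (\<Sum>i\<in>A. x i * gibbs_weight n h \<beta> i)"
    unfolding A_def using i0 x0
    by (simp add: sum.distrib sum_gibbs_weight[OF n] sum.remove[of "{..<n}" i0] flip: sum_distrib_left)
  also have "\<dots> \<le> h i0 + (\<Sum>i\<in>A. x i * exp (- \<beta> * x i))"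
    unfolding weight using xpos T0
    by (intro add_left_mono sum_mono mult_left_mono) (auto simp: divide_le_eq less_imp_le)
  finally have E: "(\<Sum>i<n. h i * gibbs_weight n h \<beta> i) \<le> h i0 + (\<Sum>i\<in>A. x i * exp (- \<beta> * x i))" .
  have "gibbs_entropy n h \<beta> = \<beta> * (\<Sum>i<n. h i * gibbs_weight n h \<beta> i) - \<beta> * h i0 + ln (1 + T)"
    by (simp add: gibbs_entropy_def ln_Z)
  also have "\<dots> \<le> \<beta> * (h i0 + (\<Sum>i\<in>A. x i * exp (- \<beta> * x i))) - \<beta> * h i0 + T"
    using E \<beta> ln_T by (intro add_mono diff_mono mult_left_mono) auto
  also have "\<dots> = (\<Sum>i\<in>A. (1 + \<beta> * x i) * exp (- \<beta> * x i))"
    by (simp add: T_def algebra_simps sum.distrib sum_distrib_left)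
  finally show ?thesis by (simp add: A_def x_def)
qed

lemma tendsto_linear_exp_decay:
  assumes "(x::real) > 0"
  shows "((\<lambda>\<beta>. (1 + \<beta> * x) * exp (- \<beta> * x)) \<longlongrightarrow> 0) at_top"
proof -
  have "((\<lambda>y::real. y ^ 0 / exp y + y ^ 1 / exp y) \<longlongrightarrow> 0 + 0) at_top"
    by (intro tendsto_add tendsto_power_div_exp_0)
  moreover have "filterlim (\<lambda>\<beta>. \<beta> * x) at_top at_top"
    by (rule filterlim_at_top_mult_tendsto_pos[OF tendsto_const assms filterlim_ident])
  ultimately have "((\<lambda>\<beta>. (\<beta> * x) ^ 0 / exp (\<beta> * x) + (\<beta> * x) ^ 1 / exp (\<beta> * x)) \<longlongrightarrow> 0) at_top"
    using filterlim_compose by fastforce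
  then show ?thesis by (simp add: exp_minus field_simps)
qed

lemma gibbs_entropy_less:
  assumes i0: "i0 < n" and gt: "\<forall>i<n. i \<noteq> i0 \<longrightarrow> h i > h i0" and S: "S > 0"
  obtains R where "R \<ge> 0" "gibbs_entropy n h R < S"
proof -
  define B where "B \<beta> = (\<Sum>i\<in>{..<n} - {i0}. (1 + \<beta> * (h i - h i0)) * exp (- \<beta> * (h i - h i0)))" for \<beta>
  have "(B \<longlongrightarrow> (\<Sum>i\<in>{..<n} - {i0}. 0)) at_top"
    unfolding B_def by (intro tendsto_sum tendsto_linear_exp_decay) (use gt in auto)
  then have "eventually (\<lambda>\<beta>. B \<beta> < S) at_top" using S by (intro order_tendstoD(2)) auto
  then obtain N where N: "\<And>\<beta>. \<beta> \<ge> N \<Longrightarrow> B \<beta> < S" by (auto simp: eventually_at_top_linorder)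
  have "gibbs_entropy n h (max N 0) \<le> B (max N 0)"
    unfolding B_def by (rule gibbs_entropy_le[OF i0 gt]) simp
  also have "\<dots> < S" by (rule N) simp
  finally show ?thesis by (intro that[of "max N 0"]) auto
qed

lemma gibbs_entropy_surj:
  assumes i0: "i0 < n" and gt: "\<forall>i<n. i \<noteq> i0 \<longrightarrow> h i > h i0" and S: "S > 0" "S \<le> ln n"
  obtains \<beta> where "\<beta> \<ge> 0" "gibbs_entropy n h \<beta> = S"
proof -
  have n: "n > 0" using i0 by simp
  obtain R where R: "R \<ge> 0" "gibbs_entropy n h R < S" using gibbs_entropy_less[OF i0 gt S(1)] .
  have "\<exists>x\<ge>0. x \<le> R \<and> gibbs_entropy n h x = S"
    by (rule IVT2') (use R S gibbs_entropy_0[OF n] continuous_on_gibbs_entropy[OF n] in auto)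
  then show ?thesis using that by blast
qed

section \<open>Energy and entropy of states\<close>

lemma sum_mset_image_upt: "(\<Sum>x\<in>#image_mset g (mset [0..<n]). f x) = (\<Sum>i<n. f (g i))"
  by (induction n) (auto simp: add.commute)

lemma entropy_eigen_decomp:
  assumes "eigen_decomp n U l M"
  shows "entropy M = - (\<Sum>i<n. xlogx (l i))"
  unfolding entropy_def eigvals_eigen_decomp[OF assms] sum_mset_image_upt by simp

definition overlap :: "nat \<Rightarrow> (nat \<Rightarrow> nat \<Rightarrow> complex) \<Rightarrow> (nat \<Rightarrow> nat \<Rightarrow> complex) \<Rightarrow> nat \<Rightarrow> nat \<Rightarrow> complex" where
  "overlap n U V i j = (\<Sum>b<n. cnj (U b i) * V b j)"

lemma cnj_overlap: "cnj (overlap n U V i j) = overlap n V U j i"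
  by (simp add: overlap_def mult.commute)

lemma overlap_self:
  assumes "unitary_fun n U" "i < n" "j < n"
  shows "overlap n U U i j = (if i = j then 1 else 0)"
  using assms unfolding unitary_fun_def overlap_def by auto

lemma sum_overlap_sq_col:
  assumes "unitary_fun n U" "unitary_fun n V" "j < n"
  shows "(\<Sum>i<n. cnj (overlap n U V i j) * overlap n U V i j) = 1"
proof -
  have U2: "\<And>a b. a<n \<Longrightarrow> b<n \<Longrightarrow> (\<Sum>i<n. U a i * cnj (U b i)) = (if a=b then 1 else 0)"
    and V1: "(\<Sum>a<n. cnj (V a j) * V a j) = 1"
    using assms unfolding unitary_fun_def by auto
  have "(\<Sum>i<n. cnj (overlap n U V i j) * overlap n U V i j)
      = (\<Sum>i<n. \<Sum>a<n. \<Sum>b<n. cnj (V a j) * V b j * (U a i * cnj (U b i)))"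
    by (simp add: overlap_def sum_distrib_left sum_distrib_right sum_product mult_ac)
      (rule sum.cong[OF refl], rule sum.swap)
  also have "\<dots> = (\<Sum>a<n. \<Sum>b<n. \<Sum>i<n. cnj (V a j) * V b j * (U a i * cnj (U b i)))"
    by (subst sum.swap) (rule sum.cong[OF refl], rule sum.swap)
  also have "\<dots> = (\<Sum>a<n. \<Sum>b<n. cnj (V a j) * V b j * (if a = b then 1 else 0))"
    by (intro sum.cong refl) (simp add: U2 flip: sum_distrib_left)
  also have "\<dots> = 1" using V1 by simp
  finally show ?thesis .
qed

lemma sum_overlap_sq_row:
  assumes "unitary_fun n U" "unitary_fun n V" "i < n"
  shows "(\<Sum>j<n. cnj (overlap n U V i j) * overlap n U V i j) = 1"
proof -
  have "(\<Sum>j<n. cnj (overlap n U V i j) * overlap n U V i j) = (\<Sum>j<n. cnj (overlap n V U j i) * overlap n V U j i)"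
    by (intro sum.cong refl) (metis cnj_overlap complex_cnj_cnj mult.commute)
  also have "\<dots> = 1" by (rule sum_overlap_sq_col[OF assms(2,1,3)])
  finally show ?thesis .
qed

lemma trace_mult_eigen_decomp:
  assumes H: "eigen_decomp n U h H" and S: "eigen_decomp n V p S"
  shows "trace (H * S) =
    (\<Sum>i<n. \<Sum>j<n. of_real (h i) * of_real (p j) * (cnj (overlap n U V i j) * overlap n U V i j))"
proof -
  have Hc: "H \<in> carrier_mat n n" and Sc: "S \<in> carrier_mat n n"
    and He: "\<And>a b. a<n \<Longrightarrow> b<n \<Longrightarrow> H $$ (a,b) = (\<Sum>i<n. U a i * of_real (h i) * cnj (U b i))"
    and Se: "\<And>a b. a<n \<Longrightarrow> b<n \<Longrightarrow> S $$ (a,b) = (\<Sum>i<n. V a i * of_real (p i) * cnj (V b i))"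
    using H S unfolding eigen_decomp_def by auto
  have "trace (H * S) = (\<Sum>a<n. \<Sum>b<n. H $$ (a,b) * S $$ (b,a))"
    unfolding trace_def using Hc Sc by (simp add: scalar_prod_def atLeast0LessThan)
  also have "\<dots> = (\<Sum>a<n. \<Sum>b<n. \<Sum>i<n. \<Sum>j<n.
      U a i * of_real (h i) * cnj (U b i) * (V b j * of_real (p j) * cnj (V a j)))"
    by (simp add: He Se sum_product)
  also have "\<dots> = (\<Sum>a<n. \<Sum>i<n. \<Sum>j<n. \<Sum>b<n.
      U a i * of_real (h i) * cnj (U b i) * (V b j * of_real (p j) * cnj (V a j)))"
    by (rule sum.cong[OF refl], subst sum.swap, rule sum.cong[OF refl], rule sum.swap)
  also have "\<dots> = (\<Sum>i<n. \<Sum>j<n. \<Sum>a<n. \<Sum>b<n.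
      U a i * of_real (h i) * cnj (U b i) * (V b j * of_real (p j) * cnj (V a j)))"
    by (subst sum.swap) (rule sum.cong[OF refl], rule sum.swap)
  also have "\<dots> = (\<Sum>i<n. \<Sum>j<n. of_real (h i) * of_real (p j) * (cnj (overlap n U V i j) * overlap n U V i j))"
    by (simp add: overlap_def sum_distrib_left sum_distrib_right sum_product mult_ac)
      (rule sum.cong[OF refl], rule sum.cong[OF refl], rule sum.swap)
  finally show ?thesis .
qed

lemma energy_eigen_decomp:
  assumes "eigen_decomp n U h H" "eigen_decomp n V p S"
  shows "energy H S = (\<Sum>i<n. \<Sum>j<n. h i * p j * (cmod (overlap n U V i j))\<^sup>2)"
  unfolding energy_def trace_mult_eigen_decomp[OF assms] cnj_mult_self Re_sum
  by (simp del: of_real_power)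

lemma energy_same_basis:
  assumes "eigen_decomp n U h H" "eigen_decomp n U p S"
  shows "energy H S = (\<Sum>i<n. h i * p i)"
proof -
  have U: "unitary_fun n U" using assms by (simp add: eigen_decomp_def)
  have "energy H S = (\<Sum>i<n. \<Sum>j<n. h i * p j * (if i = j then 1 else 0))"
    unfolding energy_eigen_decomp[OF assms] by (intro sum.cong refl) (simp add: overlap_self[OF U])
  then show ?thesis by simp
qed

lemma is_state_eigen_decomp:
  assumes "eigen_decomp n U l M" "\<And>i. i < n \<Longrightarrow> l i \<ge> 0" "(\<Sum>i<n. l i) = 1"
  shows "is_state n M"
  unfolding is_state_def
  using hermitian_eigen_decomp[OF assms(1)] psd_eigen_decomp[OF assms(1,2)]
    trace_eigen_decomp[OF assms(1)] assms(3)
  by (simp flip: of_real_sum)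

lemma state_eigen_decomp:
  assumes "is_state n M"
  obtains V p where "eigen_decomp n V p M" "\<And>j. j < n \<Longrightarrow> p j \<ge> 0" "(\<Sum>j<n. p j) = 1"
proof -
  have "hermitian_mat n M" using assms by (simp add: is_state_def)
  then obtain V p where sp: "eigen_decomp n V p M" using hermitian_eigen_decomp_exists by blast
  moreover have "p j \<ge> 0" if "j < n" for j
    using eigen_decomp_nonneg[OF sp _ that] assms by (auto simp: is_state_def)
  moreover have "complex_of_real (\<Sum>j<n. p j) = 1"
    using trace_eigen_decomp[OF sp] assms by (simp add: is_state_def)
  then have "(\<Sum>j<n. p j) = 1" by (metis of_real_1 of_real_eq_iff)
  ultimately show ?thesis by (rule that)
qed

lemma entropy_state_bounds:
  assumes "is_state n \<sigma>"
  shows "entropy \<sigma> \<ge> 0" "entropy \<sigma> \<le> ln n"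
proof -
  obtain V p where sp: "eigen_decomp n V p \<sigma>" and p0: "\<And>j. j < n \<Longrightarrow> p j \<ge> 0"
    and p1: "(\<Sum>j<n. p j) = 1"
    using state_eigen_decomp[OF assms] by blast
  have "xlogx (p j) \<le> 0" if j: "j < n" for j
  proof (cases "p j = 0")
    case False
    have "p j \<le> 1" using p0 p1 j member_le_sum[of j "{..<n}" p] by auto
    then have "ln (p j) \<le> 0" using False p0[OF j] by simp
    then show ?thesis using p0[OF j] by (simp add: xlogx_def mult_nonneg_nonpos)
  qed (simp add: xlogx_def)
  then have "(\<Sum>j<n. xlogx (p j)) \<le> 0" by (intro sum_nonpos) auto
  then show "entropy \<sigma> \<ge> 0" unfolding entropy_eigen_decomp[OF sp] by simp
  have "(\<Sum>j<n. xlogx (p j)) + 0 * (\<Sum>j<n. 0 * p j) \<ge> - ln (partition_fun n (\<lambda>_. 0) 0)"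
    by (rule gibbs_variational[OF p0 p1])
  then show "entropy \<sigma> \<le> ln n" unfolding entropy_eigen_decomp[OF sp] by (simp add: partition_fun_def)
qed

text \<open>Variational principle. The squared overlaps of the eigenbases of H and \<sigma> form a doubly
  stochastic matrix, which mixes the energy levels of H.\<close>

lemma beta_free_energy_ge:
  assumes "eigen_decomp n U h H" "is_state n \<sigma>" "\<beta> > 0"
  shows "beta_free_energy H \<beta> \<sigma> \<ge> - ln (partition_fun n h \<beta>) / \<beta>"
proof -
  obtain V p where sp: "eigen_decomp n V p \<sigma>" and p0: "\<And>j. j < n \<Longrightarrow> p j \<ge> 0"
    and p1: "(\<Sum>j<n. p j) = 1"
    using state_eigen_decomp[OF assms(2)] by blast
  have U: "unitary_fun n U" and V: "unitary_fun n V" using assms(1) sp by (auto simp: eigen_decomp_def)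
  define c where "c i j = (cmod (overlap n U V i j))\<^sup>2" for i j
  have "complex_of_real (\<Sum>i<n. c i j) = 1" if "j < n" for j
    using sum_overlap_sq_col[OF U V that] by (simp add: c_def cnj_mult_self del: of_real_power)
  then have col: "(\<Sum>i<n. c i j) = 1" if "j < n" for j by (metis of_real_1 of_real_eq_iff that)
  have "complex_of_real (\<Sum>j<n. c i j) = 1" if "i < n" for i
    using sum_overlap_sq_row[OF U V that] by (simp add: c_def cnj_mult_self del: of_real_power)
  then have row: "(\<Sum>j<n. c i j) = 1" if "i < n" for i by (metis of_real_1 of_real_eq_iff that)
  have "(\<Sum>j<n. xlogx (p j)) + \<beta> * (\<Sum>i<n. \<Sum>j<n. h i * p j * c i j) \<ge> - ln (partition_fun n h \<beta>)"
    by (rule gibbs_variational_doubly_stochastic[OF p0 p1 _ col row]) (auto simp: c_def)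
  moreover have "energy H \<sigma> = (\<Sum>i<n. \<Sum>j<n. h i * p j * c i j)"
    unfolding c_def by (rule energy_eigen_decomp[OF assms(1) sp])
  ultimately show ?thesis using assms(3)
    unfolding beta_free_energy_def entropy_eigen_decomp[OF sp] by (simp add: field_simps)
qed

lemma eigen_decomp_gibbs:
  assumes "eigen_decomp n U h H" "n > 0"
  shows "eigen_decomp n U (gibbs_weight n h \<beta>) (gibbs H \<beta>)"
proof -
  define E where "E = mat_exp ((- complex_of_real \<beta>) \<cdot>\<^sub>m H)"
  have "eigen_decomp n U (\<lambda>i. exp (- \<beta> * h i)) E"
    unfolding E_def using eigen_decomp_mat_exp[OF eigen_decomp_smult[OF assms(1), of "- \<beta>"]] by simp
  then have "eigen_decomp n U (\<lambda>i. (1 / partition_fun n h \<beta>) * exp (- \<beta> * h i))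
      (complex_of_real (1 / partition_fun n h \<beta>) \<cdot>\<^sub>m E)"
    by (rule eigen_decomp_smult)
  moreover have "trace E = complex_of_real (partition_fun n h \<beta>)"
    unfolding trace_eigen_decomp[OF \<open>eigen_decomp n U _ E\<close>] partition_fun_def by simp
  then have "gibbs H \<beta> = complex_of_real (1 / partition_fun n h \<beta>) \<cdot>\<^sub>m E"
    unfolding gibbs_def E_def[symmetric] by simp
  moreover have "gibbs_weight n h \<beta> = (\<lambda>i. (1 / partition_fun n h \<beta>) * exp (- \<beta> * h i))"
    by (rule ext) (simp add: gibbs_weight_def)
  ultimately show ?thesis by simp
qed

lemma is_state_gibbs:
  assumes "eigen_decomp n U h H" "n > 0"
  shows "is_state n (gibbs H \<beta>)"
  by (rule is_state_eigen_decomp[OF eigen_decomp_gibbs[OF assms]])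
    (auto intro: less_imp_le gibbs_weight_pos[OF assms(2)] sum_gibbs_weight[OF assms(2)])

lemma entropy_gibbs:
  assumes "eigen_decomp n U h H" "n > 0"
  shows "entropy (gibbs H \<beta>) = gibbs_entropy n h \<beta>"
  unfolding entropy_eigen_decomp[OF eigen_decomp_gibbs[OF assms]] sum_xlogx_gibbs_weight[OF assms(2)]
  by simp

lemma beta_free_energy_gibbs:
  assumes "eigen_decomp n U h H" "n > 0" "\<beta> > 0"
  shows "beta_free_energy H \<beta> (gibbs H \<beta>) = - ln (partition_fun n h \<beta>) / \<beta>"
  unfolding beta_free_energy_def entropy_gibbs[OF assms(1,2)] gibbs_entropy_def
    energy_same_basis[OF assms(1) eigen_decomp_gibbs[OF assms(1,2)]]
  using assms(3) by (simp add: field_simps)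

section \<open>The ground state and the intrinsic temperature\<close>

lemma count_image_mset_upt: "count (image_mset f (mset [0..<n])) y = card {i. i < n \<and> f i = y}"
proof (induction n)
  case (Suc n)
  have "{i. i < Suc n \<and> f i = y} = (if f n = y then insert n else id) {i. i < n \<and> f i = y}"
    by (auto simp: less_Suc_eq)
  then show ?case using Suc by simp
qed simp

locale nondeg_eigen_decomp =
  fixes n :: nat and U :: "nat \<Rightarrow> nat \<Rightarrow> complex" and h :: "nat \<Rightarrow> real" and H :: "complex mat"
    and i0 :: nat
  assumes decomp: "eigen_decomp n U h H"
    and ground: "i0 < n" "h i0 = min_eig H"
    and gap: "\<forall>i<n. i \<noteq> i0 \<longrightarrow> h i > h i0"

lemma nondeg_eigen_decomp_exists:
  assumes "eigen_decomp n U h H" "nondeg_ground H"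
  obtains i0 where "nondeg_eigen_decomp n U h H i0"
proof -
  have eig: "eigvals H = image_mset (\<lambda>i. complex_of_real (h i)) (mset [0..<n])"
    by (rule eigvals_eigen_decomp[OF assms(1)])
  have min: "min_eig H = Min (h ` {..<n})"
    unfolding min_eig_def eig by (simp add: image_image atLeast0LessThan)
  have "card {i. i < n \<and> complex_of_real (h i) = complex_of_real (min_eig H)} = 1"
    using assms(2) unfolding nondeg_ground_def eig count_image_mset_upt .
  then obtain i0 where i0: "{i. i < n \<and> h i = min_eig H} = {i0}" by (auto simp: card_Suc_eq)
  then have "i0 < n" "h i0 = min_eig H" by auto
  moreover have "h i \<ge> h i0" if "i < n" for i
    using that min \<open>h i0 = min_eig H\<close> by (simp add: Min_le)
  ultimately show ?thesis
    using assms(1) i0 by (intro that) (fastforce simp: nondeg_eigen_decomp_def)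
qed

context nondeg_eigen_decomp
begin

lemma n_pos: "n > 0"
  using ground by simp

lemma eigen_decomp_ground_projector:
  "eigen_decomp n U (\<lambda>i. if i = i0 then 1 else 0) (mat n n (\<lambda>(a,b). U a i0 * cnj (U b i0)))"
proof -
  have "(\<Sum>i<n. U a i * of_real (if i = i0 then 1 else 0) * cnj (U b i))
      = (\<Sum>i<n. if i = i0 then U a i0 * cnj (U b i0) else 0)" for a b
    by (intro sum.cong refl) auto
  then have "(\<Sum>i<n. U a i * of_real (if i = i0 then 1 else 0) * cnj (U b i)) = U a i0 * cnj (U b i0)" for a b
    using ground by simp
  then show ?thesis using decomp unfolding eigen_decomp_def by auto
qed

lemma ground_projector_unique:
  assumes P: "hermitian_mat n P" "trace P = 1" "H * P = complex_of_real (min_eig H) \<cdot>\<^sub>m P"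
  shows "P = mat n n (\<lambda>(a,b). U a i0 * cnj (U b i0))"
proof -
  have Pc: "P \<in> carrier_mat n n" using P(1) by (simp add: hermitian_mat_def)
  have U1: "\<And>i j. i<n \<Longrightarrow> j<n \<Longrightarrow> (\<Sum>a<n. cnj (U a i) * U a j) = (if i=j then 1 else 0)"
    and U2: "\<And>a b. a<n \<Longrightarrow> b<n \<Longrightarrow> (\<Sum>i<n. U a i * cnj (U b i)) = (if a=b then 1 else 0)"
    using decomp unfolding eigen_decomp_def unitary_fun_def by auto
  define Q where "Q i b = (\<Sum>a<n. cnj (U a i) * P $$ (a,b))" for i b
  have Q0: "Q i b = 0" if "i < n" "b < n" "i \<noteq> i0" for i b
  proof -
    have "of_real (h i) * Q i b = (\<Sum>a<n. cnj (U a i) * (H * P) $$ (a,b))"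
      unfolding Q_def by (rule eigen_decomp_left_mult[OF decomp Pc that(1,2), symmetric])
    also have "\<dots> = of_real (h i0) * Q i b"
      unfolding P(3) using Pc that ground by (simp add: Q_def sum_distrib_left mult_ac)
    finally have "(of_real (h i) - of_real (h i0)) * Q i b = 0" by (simp add: algebra_simps)
    moreover have "h i \<noteq> h i0" using gap that by force
    ultimately show ?thesis by simp
  qed
  have P_Q: "P $$ (a,b) = U a i0 * Q i0 b" if "a < n" "b < n" for a b
  proof -
    have "(\<Sum>i<n. U a i * Q i b) = (\<Sum>x<n. P $$ (x,b) * (\<Sum>i<n. U a i * cnj (U x i)))"
      unfolding Q_def by (simp add: sum_distrib_left sum_distrib_right mult_ac) (rule sum.swap)
    also have "\<dots> = (\<Sum>x<n. P $$ (x,b) * (if a = x then 1 else 0))"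
      using that by (intro sum.cong refl) (simp add: U2)
    also have "\<dots> = P $$ (a,b)" using that by simp
    finally have "P $$ (a,b) = (\<Sum>i<n. U a i * Q i b)" by simp
    also have "\<dots> = (\<Sum>i<n. if i = i0 then U a i * Q i b else 0)"
      using that Q0 by (intro sum.cong refl) auto
    also have "\<dots> = U a i0 * Q i0 b" using ground by (simp add: sum.delta)
    finally show ?thesis .
  qed
  define \<kappa> where "\<kappa> = (\<Sum>a<n. cnj (U a i0) * cnj (Q i0 a))"
  have P_\<kappa>: "P $$ (a,b) = \<kappa> * (U a i0 * cnj (U b i0))" if "a < n" "b < n" for a b
  proof -
    have "Q i0 b = (\<Sum>a<n. cnj (U a i0) * cnj (P $$ (b,a)))"
      unfolding Q_def using that by (intro sum.cong refl) (metis hermitian_mat_entry[OF P(1)] lessThan_iff)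
    also have "\<dots> = cnj (U b i0) * \<kappa>"
      using that by (simp add: P_Q \<kappa>_def sum_distrib_left mult_ac)
    finally show ?thesis using that by (simp add: P_Q mult_ac)
  qed
  have "trace P = \<kappa> * (\<Sum>a<n. cnj (U a i0) * U a i0)"
    unfolding trace_def using Pc by (simp add: P_\<kappa> sum_distrib_left mult_ac)
  then have "\<kappa> = 1" using P(2) U1 ground by simp
  then show ?thesis using Pc P_\<kappa> by (auto intro!: eq_matI)
qed

lemma ground_proj_eq: "ground_proj H = mat n n (\<lambda>(a,b). U a i0 * cnj (U b i0))"
proof -
  define P0 where "P0 = mat n n (\<lambda>(a,b). U a i0 * cnj (U b i0))"
  note P0 = eigen_decomp_ground_projector[folded P0_def]
  have "hermitian_mat n P0 \<and> P0 * P0 = P0 \<and> trace P0 = 1 \<and> H * P0 = complex_of_real (min_eig H) \<cdot>\<^sub>m P0"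
  proof (intro conjI)
    show "hermitian_mat n P0" by (rule hermitian_eigen_decomp[OF P0])
    show "P0 * P0 = P0"
      by (rule eigen_decomp_cong[OF eigen_decomp_mult[OF P0 P0] P0]) simp
    show "trace P0 = 1"
      using trace_eigen_decomp[OF P0] ground by (simp add: if_distrib[of complex_of_real] sum.delta cong: if_cong)
    show "H * P0 = complex_of_real (min_eig H) \<cdot>\<^sub>m P0"
      by (rule eigen_decomp_cong[OF eigen_decomp_mult[OF decomp P0] eigen_decomp_smult[OF P0]])
        (simp add: ground)
  qed
  then have "(THE P. hermitian_mat n P \<and> P * P = P \<and> trace P = 1
      \<and> H * P = complex_of_real (min_eig H) \<cdot>\<^sub>m P) = P0"
    by (rule the_equality) (auto simp: P0_def intro: ground_projector_unique)
  moreover have "dim_row H = n" using decomp by (auto simp: eigen_decomp_def)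
  ultimately show ?thesis by (simp add: ground_proj_def P0_def)
qed

lemma entropy_ground_proj: "entropy (ground_proj H) = 0"
proof -
  have "xlogx (if i = i0 then 1 else 0) = 0" for i by (simp add: xlogx_def)
  then show ?thesis
    unfolding ground_proj_eq entropy_eigen_decomp[OF eigen_decomp_ground_projector] by simp
qed

lemma entropy_gibbs_e_ereal: "entropy (gibbs_e H (ereal \<beta>)) = gibbs_entropy n h \<beta>"
  by (simp add: gibbs_e_def entropy_gibbs[OF decomp n_pos])

lemma entropy_gibbs_e_infinity: "entropy (gibbs_e H \<infinity>) = 0"
  by (simp add: gibbs_e_def entropy_ground_proj)

lemma entropy_gibbs_e_inj:
  assumes "n \<ge> 2" "0 \<le> b1" "0 \<le> b2" "entropy (gibbs_e H b1) = entropy (gibbs_e H b2)"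
  shows "b1 = b2"
proof -
  obtain j where j: "j < n" "j \<noteq> i0"
  proof (cases "i0 = 0")
    case True
    then show ?thesis using assms(1) by (intro that[of 1]) auto
  next
    case False
    then show ?thesis using ground by (intro that[of 0]) auto
  qed
  have hj: "h j \<noteq> h i0" using gap j by force
  have pos: "entropy (gibbs_e H (ereal r)) \<noteq> 0" for r
    unfolding entropy_gibbs_e_ereal using gibbs_entropy_pos[OF j(1) ground(1) j(2), of h r] by linarith
  have real_inj: "r1 = r2" if "0 \<le> r1" "0 \<le> r2" "gibbs_entropy n h r1 = gibbs_entropy n h r2" for r1 r2
  proof (rule ccontr)
    assume "r1 \<noteq> r2"
    then consider "r1 < r2" | "r2 < r1" by linarith
    then show False
      using gibbs_entropy_strict_decreasing[OF j(1) ground(1) hj] that by cases force+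
  qed
  show ?thesis
  proof (cases "b1 = \<infinity> \<or> b2 = \<infinity>")
    case True
    then show ?thesis using assms(2-4) pos entropy_gibbs_e_infinity by (cases b1; cases b2) auto
  next
    case False
    then obtain r1 r2 where "b1 = ereal r1" "b2 = ereal r2" using assms(2,3) by (cases b1; cases b2) auto
    then show ?thesis using assms(2-4) real_inj[of r1 r2] by (simp add: entropy_gibbs_e_ereal)
  qed
qed

text \<open>beta_intr is a definite description; it denotes the intended value only because the entropy
  of gibbs_e is injective on [0, \<infinity>], which needs a second energy level.\<close>

lemma beta_intr:
  assumes "n \<ge> 2" "is_state n \<rho>"
  shows "0 \<le> beta_intr H \<rho>" "entropy (gibbs_e H (beta_intr H \<rho>)) = entropy \<rho>"
proof -
  let ?P = "\<lambda>b. 0 \<le> b \<and> entropy (gibbs_e H b) = entropy \<rho>"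
  have "\<exists>b. ?P b"
  proof (cases "entropy \<rho> = 0")
    case True
    then show ?thesis using entropy_gibbs_e_infinity by (intro exI[of _ \<infinity>]) simp
  next
    case False
    then have "entropy \<rho> > 0" "entropy \<rho> \<le> ln n" using entropy_state_bounds[OF assms(2)] by auto
    then obtain r where "r \<ge> 0" "gibbs_entropy n h r = entropy \<rho>"
      using gibbs_entropy_surj[OF ground(1) gap] by blast
    then show ?thesis by (intro exI[of _ "ereal r"]) (simp add: entropy_gibbs_e_ereal)
  qed
  then have "\<exists>!b. ?P b"
  proof (rule ex_ex1I)
    fix b1 b2 assume "?P b1" "?P b2"
    then show "b1 = b2" by (intro entropy_gibbs_e_inj[OF assms(1)]) auto
  qed
  then have "?P (THE b. ?P b)" by (rule theI')
  then show "0 \<le> beta_intr H \<rho>" "entropy (gibbs_e H (beta_intr H \<rho>)) = entropy \<rho>"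
    unfolding beta_intr_def by auto
qed

end

section \<open>Free energy\<close>

lemma bound_energy_ge:
  assumes "eigen_decomp n U h H" "is_state n \<rho>" "\<beta> > 0"
  shows "bound_energy H \<rho> \<ge> - ln (partition_fun n h \<beta>) / \<beta> + entropy \<rho> / \<beta>"
proof -
  have "dim_row H = n" using assms(1) by (auto simp: eigen_decomp_def)
  moreover have "energy H \<sigma> \<ge> - ln (partition_fun n h \<beta>) / \<beta> + entropy \<rho> / \<beta>"
    if "is_state n \<sigma>" "entropy \<sigma> = entropy \<rho>" for \<sigma>
    using beta_free_energy_ge[OF assms(1) that(1) assms(3)] that(2)
    by (simp add: beta_free_energy_def)
  ultimately show ?thesis
    unfolding bound_energy_def using assms(2) by (intro cInf_greatest) auto
qed

lemma bound_energy_le: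
  assumes "eigen_decomp n U h H" "is_state n \<sigma>" "entropy \<sigma> = entropy \<rho>"
  shows "bound_energy H \<rho> \<le> energy H \<sigma>"
proof -
  have "dim_row H = n" using assms(1) by (auto simp: eigen_decomp_def)
  moreover have "bdd_below (energy H ` {\<sigma>. is_state n \<sigma> \<and> entropy \<sigma> = entropy \<rho>})"
    using beta_free_energy_ge[OF assms(1), where \<beta> = 1]
    by (intro bdd_belowI2[of _ "- ln (partition_fun n h 1) + entropy \<rho>"])
      (force simp: beta_free_energy_def)
  ultimately show ?thesis
    unfolding bound_energy_def using assms(2,3) by (intro cInf_lower) auto
qed

lemma free_energy_le:
  assumes "eigen_decomp n U h H" "n > 0" "is_state n \<rho>" "\<beta> > 0"
  shows "free_energy H \<rho> \<le> beta_free_energy H \<beta> \<rho> - beta_free_energy H \<beta> (gibbs H \<beta>)"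
  using bound_energy_ge[OF assms(1,3,4)]
  unfolding free_energy_def beta_free_energy_gibbs[OF assms(1,2,4)] beta_free_energy_def[of H \<beta> \<rho>]
  by simp

text \<open>The Gibbs state of the right entropy competes in the bound energy.\<close>

lemma free_energy_eq:
  assumes "eigen_decomp n U h H" "n > 0" "is_state n \<rho>" "\<beta> > 0"
    and "entropy (gibbs H \<beta>) = entropy \<rho>"
  shows "free_energy H \<rho> = beta_free_energy H \<beta> \<rho> - beta_free_energy H \<beta> (gibbs H \<beta>)"
proof -
  have "bound_energy H \<rho> \<le> energy H (gibbs H \<beta>)"
    by (rule bound_energy_le[OF assms(1) is_state_gibbs[OF assms(1,2)] assms(5)])
  then have "free_energy H \<rho> \<ge> beta_free_energy H \<beta> \<rho> - beta_free_energy H \<beta> (gibbs H \<beta>)"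
    unfolding free_energy_def beta_free_energy_def assms(5) by simp
  then show ?thesis using free_energy_le[OF assms(1-4)] by linarith
qed

theorem mainTheorem2:
  fixes d :: nat and H \<rho> :: "complex mat"
  assumes "d \<ge> 2"
    and "hermitian_mat d H"
    and "nondeg_ground H"
    and "is_state d \<rho>"
  shows "(\<forall>\<beta>>0. free_energy H \<rho>
            \<le> beta_free_energy H \<beta> \<rho> - beta_free_energy H \<beta> (gibbs H \<beta>))
       \<and> (0 < beta_intr H \<rho> \<and> beta_intr H \<rho> < \<infinity> \<longrightarrow>
            (let b = real_of_ereal (beta_intr H \<rho>) in
               free_energy H \<rho> = beta_free_energy H b \<rho> - beta_free_energy H b (gibbs H b)
             \<and> free_energy H \<rho> =
                 (INF \<beta>\<in>{0<..}. beta_free_energy H \<beta> \<rho> - beta_free_energy H \<beta> (gibbs H \<beta>))))"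
proof -
  obtain U h where sp: "eigen_decomp d U h H"
    using hermitian_eigen_decomp_exists[OF assms(2)] by blast
  obtain i0 where nd: "nondeg_eigen_decomp d U h H i0"
    using nondeg_eigen_decomp_exists[OF sp assms(3)] .
  have d: "d > 0" using assms(1) by simp
  define g where "g \<beta> = beta_free_energy H \<beta> \<rho> - beta_free_energy H \<beta> (gibbs H \<beta>)" for \<beta>
  have le: "free_energy H \<rho> \<le> g \<beta>" if "\<beta> > 0" for \<beta>
    unfolding g_def by (rule free_energy_le[OF sp d assms(4) that])
  moreover have "free_energy H \<rho> = g r \<and> free_energy H \<rho> = (INF \<beta>\<in>{0<..}. g \<beta>)"
    if "beta_intr H \<rho> = ereal r" "r > 0" for r
  proof -
    have "entropy (gibbs H r) = entropy \<rho>"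
      using nondeg_eigen_decomp.beta_intr(2)[OF nd assms(1,4)] that(1) by (simp add: gibbs_e_def)
    then have eq: "free_energy H \<rho> = g r"
      unfolding g_def by (rule free_energy_eq[OF sp d assms(4) that(2)])
    then have "(INF \<beta>\<in>{0<..}. g \<beta>) = free_energy H \<rho>"
      using le that(2) by (intro cInf_eq_minimum) auto
    with eq show ?thesis by simp
  qed
  ultimately show ?thesis
    unfolding g_def Let_def by (cases "beta_intr H \<rho>") auto
qed

end
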